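(* Let $k\subset L$ be a finite cyclic field extension, with $r:=[L:k]=\prod_{i=1}^mp_i^{\alpha_i}$ where the $p_i$ are distinct primes and $\alpha_i\geq 1$. Let $\mathbb D_r$ be the set of positive divisors of $r$ and $\mathcal A$ the set of atoms of $[k,L]$. Then: (1) For each $i\in\{1,\ldots,m\}$ there is a unique $A_i\in\mathcal A$ with $[A_i:k]=p_i$; and $T\in[k,L]$ lies in $\mathcal A$ if and only if $[T:k]=p_i$ for some $i$. (2) $\mathcal S[k,L]=\prod_{i=1}^mA_i$. (3) Let $\alpha:=\sup\{\alpha_i\}$ and let $\{S_j\}_{j=0}^n$ be the Loewy series of $k\subset L$. For $j\in\{0,\ldots,n\}$, $[S_j:k]=\prod_{i=1}^mp_i^{\beta_i}$ where $\beta_i=\alpha_i$ if $\alpha_i<j$ and $\beta_i=j$ if $\alpha_i\geq j$. Moreover, $T\in[k,L]$ is an atom of $[S_j,S_{j+1}]$ if and only if $[T:k]=\prod_{i=1}^mp_i^{\gamma_i}$ where there is an index $i_0$ with $\beta_{i_0}<\alpha_{i_0}$ such that $\gamma_{i_0}=\beta_{i_0}+1$ and $\gamma_i=\beta_i$ for $i\neq i_0$. In particular $\alpha=n$. (4) $S_j\subset S_{j+1}$ is Boolean for each $j\in\{0,\ldots,n-1\}$. (5) For $T\in[k,L]$ with $T\neq k$: $T$ is $\Pi$-irreducible in $[k,L]$ if and only if $[T:k]=p_i^{\beta}$ for some $i\in\{1,\ldots,m\}$ and some $\beta\in\{1,\ldots,\alpha_i\}$. (6) $|[k,L]|=\mathrm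 d([L:k])=\prod_{i=1}^m(\alpha_i+1)=|\mathbb D_r|$, where $\mathrm d$ is the number of divisors. If $\mathcal A_j$ denotes the set of atoms of $[S_j,S_{j+1}]$, then $\ell[k,L]=\sum_{j=0}^{\alpha-1}|\mathcal A_j|=\sum_{i=1}^m\alpha_i$, which is the number of $\Pi$-irreducible elements of $[k,L]$ different from $k$. (7) The following are equivalent: (a) $k\subset L$ is a $\mathcal P$-extension; (b) $k\subset L$ is either Boolean or a chain; (c) either $m=1$ or $\alpha=1$.
   Context: For a field extension $k\subseteq L$, $[k,L]$ is the lattice of intermediate fields (meet = intersection, join = compositum $TU$). $K\subset K'$ is minimal if $[K,K']=\{K,K'\}$; an atom of $[K,K'']$ is $K'$ with $K\subset K'$ minimal and $K'\subseteq K''$. The socle $\mathcal S[K,L]$ is the compositum of all atoms of $[K,L]$; the Loewy series of $k\subset L$ is $S_0=k$, $S_{j+1}=\mathcal S[S_j,L]$ while $S_j\neq L$, with $n$ least such that $S_n=L$. $\ell[k,L]$ is the supremum of lengths of chains in $[k,L]$. The extension $K\subseteq K'$ is Boolean if $[K,K']$ is a distributive lattice in which every element $V$ has a complement $V'$ ($V\cap V'=K$, $VV'=K'$). $k\subset L$ is a $\mathcal P$-extension if $[k,L]=\bigcup_{j=0}^{n-1}[S_j,S_{j+1}]$. An element $T\in[k,L]$ is $\Pi$-irreducible if $T=T_1T_2$ with $T_1,T_2\in[k,L]$ implies $T=T_1$ or $T=T_2$. *)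

theory Defs
  imports "HOL-Algebra.Algebra" "HOL-Computational_Algebra.Primes"
begin

definition interm :: "('a, 'b) ring_scheme \<Rightarrow> 'a set \<Rightarrow> 'a set \<Rightarrow> 'a set set" where
  "interm R K L = {T. subfield T R \<and> K \<subseteq> T \<and> T \<subseteq> L}"

definition compositum :: "('a, 'b) ring_scheme \<Rightarrow> 'a set \<Rightarrow> 'a set \<Rightarrow> 'a set" where
  "compositum R T U = generate_field R (T \<union> U)"

definition minimal_ext :: "('a, 'b) ring_scheme \<Rightarrow> 'a set \<Rightarrow> 'a set \<Rightarrow> bool" where
  "minimal_ext R K K' \<longleftrightarrow> K \<subset> K' \<and> interm R K K' = {K, K'}"

definition atoms :: "('a, 'b) ring_scheme \<Rightarrow> 'a set \<Rightarrow> 'a set \<Rightarrow> 'a set set" where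
  "atoms R K K'' = {K'. minimal_ext R K K' \<and> K' \<subseteq> K''}"

definition socle :: "('a, 'b) ring_scheme \<Rightarrow> 'a set \<Rightarrow> 'a set \<Rightarrow> 'a set" where
  "socle R K L = generate_field R (K \<union> \<Union> (atoms R K L))"

(* Loewy series S_0 = k, S_{j+1} = socle of [S_j, L]; once S_j = L it stays L *)
definition loewy :: "('a, 'b) ring_scheme \<Rightarrow> 'a set \<Rightarrow> 'a set \<Rightarrow> nat \<Rightarrow> 'a set" where
  "loewy R k L j = ((\<lambda>S. if S = L then L else socle R S L) ^^ j) k"

definition loewy_length :: "('a, 'b) ring_scheme \<Rightarrow> 'a set \<Rightarrow> 'a set \<Rightarrow> nat" where
  "loewy_length R k L = (LEAST n. loewy R k L n = L)"

definition lattice_length :: "('a, 'b) ring_scheme \<Rightarrow> 'a set \<Rightarrow> 'a set \<Rightarrow> nat" where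
  "lattice_length R k L = Sup {card C - 1 | C. C \<subseteq> interm R k L \<and> finite C \<and> C \<noteq> {} \<and>
       (\<forall>A\<in>C. \<forall>B\<in>C. A \<subseteq> B \<or> B \<subseteq> A)}"

definition is_boolean_ext :: "('a, 'b) ring_scheme \<Rightarrow> 'a set \<Rightarrow> 'a set \<Rightarrow> bool" where
  "is_boolean_ext R K K' \<longleftrightarrow>
     (\<forall>T\<in>interm R K K'. \<forall>U\<in>interm R K K'. \<forall>V\<in>interm R K K'.
        T \<inter> compositum R U V = compositum R (T \<inter> U) (T \<inter> V)) \<and>
     (\<forall>V\<in>interm R K K'. \<exists>V'\<in>interm R K K'. V \<inter> V' = K \<and> compositum R V V' = K')"

definition is_chain_ext :: "('a, 'b) ring_scheme \<Rightarrow> 'a set \<Rightarrow> 'a set \<Rightarrow> bool" where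
  "is_chain_ext R K L \<longleftrightarrow> (\<forall>A\<in>interm R K L. \<forall>B\<in>interm R K L. A \<subseteq> B \<or> B \<subseteq> A)"

definition is_P_ext :: "('a, 'b) ring_scheme \<Rightarrow> 'a set \<Rightarrow> 'a set \<Rightarrow> bool" where
  "is_P_ext R k L \<longleftrightarrow>
     interm R k L = (\<Union>j<loewy_length R k L. interm R (loewy R k L j) (loewy R k L (Suc j)))"

definition Pi_irreducible :: "('a, 'b) ring_scheme \<Rightarrow> 'a set \<Rightarrow> 'a set \<Rightarrow> 'a set \<Rightarrow> bool" where
  "Pi_irreducible R k L T \<longleftrightarrow> T \<in> interm R k L \<and>
     (\<forall>T1\<in>interm R k L. \<forall>T2\<in>interm R k L. T = compositum R T1 T2 \<longrightarrow> T = T1 \<or> T = T2)"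

definition Gal :: "('a, 'b) ring_scheme \<Rightarrow> 'a set \<Rightarrow> 'a set \<Rightarrow> ('a \<Rightarrow> 'a) set" where
  "Gal R k L = {\<sigma>. \<sigma> \<in> ring_iso (R\<lparr>carrier := L\<rparr>) (R\<lparr>carrier := L\<rparr>) \<and> (\<forall>x\<in>k. \<sigma> x = x)}"

definition galois_ext :: "('a, 'b) ring_scheme \<Rightarrow> 'a set \<Rightarrow> 'a set \<Rightarrow> bool" where
  "galois_ext R k L \<longleftrightarrow> subfield k R \<and> subfield L R \<and> k \<subseteq> L \<and>
     ring.finite_dimension R k L \<and> {x\<in>L. \<forall>\<sigma>\<in>Gal R k L. \<sigma> x = x} = k"

definition cyclic_ext :: "('a, 'b) ring_scheme \<Rightarrow> 'a set \<Rightarrow> 'a set \<Rightarrow> bool" where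
  "cyclic_ext R k L \<longleftrightarrow> galois_ext R k L \<and>
     (\<exists>\<sigma>\<in>Gal R k L. \<forall>\<tau>\<in>Gal R k L. \<exists>n. \<forall>x\<in>L. \<tau> x = (\<sigma> ^^ n) x)"

end

theory Submission
  imports Defs
begin

definition field_endo :: "('a, 'b) ring_scheme \<Rightarrow> 'a set \<Rightarrow> ('a \<Rightarrow> 'a) \<Rightarrow> bool" where
  "field_endo R L g \<longleftrightarrow> (\<forall>x\<in>L. g x \<in> L) \<and>
     (\<forall>x\<in>L. \<forall>y\<in>L. g (x \<oplus>\<^bsub>R\<^esub> y) = g x \<oplus>\<^bsub>R\<^esub> g y \<and> g (x \<otimes>\<^bsub>R\<^esub> y) = g x \<otimes>\<^bsub>R\<^esub> g y) \<and>
     g \<one>\<^bsub>R\<^esub> = \<one>\<^bsub>R\<^esub>"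

definition (in ring) orbit_relation :: "'a set \<Rightarrow> ('a \<Rightarrow> 'a) \<Rightarrow> nat \<Rightarrow> 'a list \<Rightarrow> (nat \<Rightarrow> 'a) \<Rightarrow> bool"
  where "orbit_relation L g m Us c \<longleftrightarrow> (\<forall>i<length Us. c i \<in> L) \<and>
     (\<forall>j<m. (\<Oplus>i\<in>{..<length Us}. c i \<otimes> (g ^^ j) (Us ! i)) = \<zero>)"

context field
begin

lemma minus_eq_zero_iff:
  assumes "a \<in> carrier R" "b \<in> carrier R"
  shows "a \<ominus> b = \<zero> \<longleftrightarrow> a = b"
proof
  assume "a \<ominus> b = \<zero>"
  moreover have "a = (a \<ominus> b) \<oplus> b" using assms by algebra
  ultimately show "a = b" using assms by simp
qed (use assms in \<open>simp add: a_minus_def r_neg\<close>)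

lemma finsum_remove:
  assumes "finite I" "j \<in> I" "g \<in> I \<rightarrow> carrier R"
  shows "finsum R g I = g j \<oplus> finsum R g (I - {j})"
proof -
  have "finsum R g (insert j (I - {j})) = g j \<oplus> finsum R g (I - {j})"
    using assms by (intro finsum_insert) auto
  then show ?thesis using assms(2) by (simp add: insert_absorb)
qed

lemma finsum_remove_zero:
  assumes "finite I" "j \<in> I" "g \<in> I \<rightarrow> carrier R" "g j = \<zero>"
  shows "finsum R g I = finsum R g (I - {j})"
proof -
  have "finsum R g (I - {j}) \<in> carrier R" using assms(3) by (intro finsum_closed) auto
  then show ?thesis using finsum_remove[OF assms(1-3)] assms(4) by simp
qed

lemma finsum_diff:
  assumes "finite I" "f \<in> I \<rightarrow> carrier R" "g \<in> I \<rightarrow> carrier R"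
  shows "(\<Oplus>i\<in>I. f i \<ominus> g i) = finsum R f I \<ominus> finsum R g I"
  using assms
proof (induct I rule: finite_induct)
  case empty
  then show ?case by (simp add: a_minus_def)
next
  case (insert x F)
  have fx: "f x \<in> carrier R" "g x \<in> carrier R" using insert by auto
  have fF: "f \<in> F \<rightarrow> carrier R" "g \<in> F \<rightarrow> carrier R" using insert by auto
  have "(\<lambda>i. f i \<ominus> g i) \<in> F \<rightarrow> carrier R" using fF by auto
  then have "(\<Oplus>i\<in>insert x F. f i \<ominus> g i) = (f x \<ominus> g x) \<oplus> (\<Oplus>i\<in>F. f i \<ominus> g i)"
    using insert fx by (subst finsum_insert) auto
  also have "\<dots> = (f x \<ominus> g x) \<oplus> (finsum R f F \<ominus> finsum R g F)" using insert fF by simp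
  also have "\<dots> = (f x \<oplus> finsum R f F) \<ominus> (g x \<oplus> finsum R g F)"
    using fx finsum_closed[OF fF(1)] finsum_closed[OF fF(2)] by algebra
  also have "\<dots> = finsum R f (insert x F) \<ominus> finsum R g (insert x F)"
    using insert fx fF by simp
  finally show ?case .
qed

lemma finsum_in_subring:
  assumes "subring K R" "finite I" "\<And>i. i \<in> I \<Longrightarrow> f i \<in> K"
  shows "finsum R f I \<in> K"
  using assms(2,3)
proof (induct I rule: finite_induct)
  case empty
  then show ?case using subringE(2)[OF assms(1)] by simp
next
  case (insert x F)
  then have "f \<in> F \<rightarrow> carrier R" "f x \<in> carrier R" using subringE(1)[OF assms(1)] by auto
  then show ?case using insert subringE(7)[OF assms(1)] by simp
qed

subsection \<open>Homogeneous linear systems\<close>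

text \<open>Gaussian elimination: the unknown \<open>i0\<close> is eliminated with the pivot \<open>a j0 i0\<close>; a solution
  of the reduced system in the remaining unknowns extends to one of the full system.\<close>

lemma homogeneous_system_pivot:
  assumes K: "subfield K R" and I: "finite I" "i0 \<in> I"
    and a: "\<And>j i. j \<in> insert j0 J \<Longrightarrow> i \<in> I \<Longrightarrow> a j i \<in> K" and pivot: "a j0 i0 \<noteq> \<zero>"
    and c: "\<And>i. i \<in> I - {i0} \<Longrightarrow> c i \<in> K"
    and reduced: "\<And>j. j \<in> J \<Longrightarrow>
      (\<Oplus>i\<in>I - {i0}. c i \<otimes> (a j i \<ominus> a j i0 \<otimes> inv (a j0 i0) \<otimes> a j0 i)) = \<zero>"
  defines "c' \<equiv> c(i0 := \<ominus> (inv (a j0 i0) \<otimes> (\<Oplus>i\<in>I - {i0}. c i \<otimes> a j0 i)))"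
  shows "c' i0 \<in> K" and "\<And>j. j \<in> insert j0 J \<Longrightarrow> (\<Oplus>i\<in>I. c' i \<otimes> a j i) = \<zero>"
proof -
  note Ksub = subfieldE(1)[OF K] and KR = subfieldE(3)[OF K]
  define b where "b = inv (a j0 i0)"
  define s where "s = (\<lambda>j. \<Oplus>i\<in>I - {i0}. c i \<otimes> a j i)"
  have aR: "\<And>j i. j \<in> insert j0 J \<Longrightarrow> i \<in> I \<Longrightarrow> a j i \<in> carrier R" using a KR by blast
  have cR: "\<And>i. i \<in> I - {i0} \<Longrightarrow> c i \<in> carrier R" using c KR by blast
  have b: "b \<in> K" "b \<otimes> a j0 i0 = \<one>"
    using subfield_m_inv(1,3)[OF K, of "a j0 i0"] a[of j0 i0] I pivot unfolding b_def by auto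
  have sK: "s j \<in> K" if "j \<in> insert j0 J" for j
    unfolding s_def using a[OF that] c I(1) by (intro finsum_in_subring[OF Ksub]) (auto intro: subringE(6)[OF Ksub])
  have sR: "s j \<in> carrier R" if "j \<in> insert j0 J" for j using sK[OF that] KR by blast
  have bR: "b \<in> carrier R" using b KR by blast
  have c'_i0: "c' i0 = \<ominus> (b \<otimes> s j0)" unfolding c'_def b_def s_def by simp
  show "c' i0 \<in> K"
    unfolding c'_i0 using b sK[OF insertI1] by (auto intro: subringE(5,6)[OF Ksub])
  then have c'R: "c' i0 \<in> carrier R" using KR by blast
  have split: "(\<Oplus>i\<in>I. c' i \<otimes> a j i) = c' i0 \<otimes> a j i0 \<oplus> s j" if j: "j \<in> insert j0 J" for j
  proof -
    have "(\<Oplus>i\<in>I. c' i \<otimes> a j i) = c' i0 \<otimes> a j i0 \<oplus> (\<Oplus>i\<in>I - {i0}. c' i \<otimes> a j i)"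
      using I c'R cR aR[OF j] by (intro finsum_remove) (auto simp: c'_def)
    moreover have "(\<Oplus>i\<in>I - {i0}. c' i \<otimes> a j i) = s j"
      unfolding s_def using cR aR[OF j] by (intro finsum_cong') (auto simp: c'_def)
    ultimately show ?thesis by simp
  qed
  fix j assume j: "j \<in> insert j0 J"
  show "(\<Oplus>i\<in>I. c' i \<otimes> a j i) = \<zero>"
  proof (cases "j = j0")
    case True
    have "\<ominus> (b \<otimes> s j0) \<otimes> a j0 i0 \<oplus> s j0 = \<ominus> ((b \<otimes> a j0 i0) \<otimes> s j0) \<oplus> s j0"
      using bR sR[OF insertI1] aR[OF insertI1 I(2)] by algebra
    then show ?thesis using split[OF j] c'_i0 b(2) sR[OF insertI1] True by (simp add: l_neg)
  next
    case False
    then have jJ: "j \<in> J" using j by simp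
    have ajR: "\<And>i. i \<in> I \<Longrightarrow> a j i \<in> carrier R" "\<And>i. i \<in> I \<Longrightarrow> a j0 i \<in> carrier R"
      using aR j by auto
    have "(\<Oplus>i\<in>I - {i0}. c i \<otimes> (a j i \<ominus> a j i0 \<otimes> b \<otimes> a j0 i))
        = (\<Oplus>i\<in>I - {i0}. c i \<otimes> a j i \<ominus> (a j i0 \<otimes> b) \<otimes> (c i \<otimes> a j0 i))"
    proof (rule finsum_cong')
      fix i assume i: "i \<in> I - {i0}"
      have "c i \<in> carrier R" "a j i \<in> carrier R" "a j0 i \<in> carrier R" "a j i0 \<in> carrier R"
        using i cR ajR I(2) by auto
      then show "c i \<otimes> (a j i \<ominus> a j i0 \<otimes> b \<otimes> a j0 i) = c i \<otimes> a j i \<ominus> (a j i0 \<otimes> b) \<otimes> (c i \<otimes> a j0 i)"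
        using bR by algebra
    qed (use cR ajR bR I in auto)
    also have "\<dots> = s j \<ominus> (\<Oplus>i\<in>I - {i0}. (a j i0 \<otimes> b) \<otimes> (c i \<otimes> a j0 i))"
      unfolding s_def using cR ajR bR I by (intro finsum_diff) auto
    also have "(\<Oplus>i\<in>I - {i0}. (a j i0 \<otimes> b) \<otimes> (c i \<otimes> a j0 i)) = (a j i0 \<otimes> b) \<otimes> s j0"
      unfolding s_def using cR ajR bR I by (intro finsum_rdistr[symmetric]) auto
    finally have "s j \<ominus> (a j i0 \<otimes> b) \<otimes> s j0 = \<zero>"
      using reduced[OF jJ, folded b_def] by simp
    then have "s j = (a j i0 \<otimes> b) \<otimes> s j0"
      using sR[OF j] sR[OF insertI1] ajR(1)[OF I(2)] bR by (simp add: minus_eq_zero_iff)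
    moreover have "\<ominus> (b \<otimes> s j0) \<otimes> a j i0 \<oplus> (a j i0 \<otimes> b) \<otimes> s j0 = \<zero>"
      using ajR(1)[OF I(2)] bR sR[OF insertI1] by algebra
    ultimately show ?thesis
      using split[OF j] c'_i0 by simp
  qed
qed

lemma homogeneous_system_nontrivial_solution:
  assumes K: "subfield K R" and "finite J" "finite I" "card J < card I"
    and "\<And>j i. j \<in> J \<Longrightarrow> i \<in> I \<Longrightarrow> a j i \<in> K"
  shows "\<exists>c. (\<forall>i\<in>I. c i \<in> K) \<and> (\<exists>i\<in>I. c i \<noteq> \<zero>) \<and> (\<forall>j\<in>J. (\<Oplus>i\<in>I. c i \<otimes> a j i) = \<zero>)"
  using assms(2-5)
proof (induction J arbitrary: I a rule: finite_induct)
  case empty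
  then obtain i where "i \<in> I" by fastforce
  moreover have "\<one> \<in> K" using subringE(3)[OF subfieldE(1)[OF K]] .
  ultimately show ?case by (intro exI[of _ "\<lambda>_. \<one>"]) auto
next
  case (insert j0 J)
  show ?case
  proof (cases "\<exists>i0\<in>I. a j0 i0 \<noteq> \<zero>")
    case False
    have "card J < card I" using insert by simp
    then obtain c where c: "\<forall>i\<in>I. c i \<in> K" "\<exists>i\<in>I. c i \<noteq> \<zero>" "\<forall>j\<in>J. (\<Oplus>i\<in>I. c i \<otimes> a j i) = \<zero>"
      using insert.IH[of I a] insert.prems by auto
    moreover have "(\<Oplus>i\<in>I. c i \<otimes> a j0 i) = \<zero>"
      using False c(1) subfieldE(3)[OF K] by (intro add.finprod_one_eqI) auto
    ultimately show ?thesis by auto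
  next
    case True
    then obtain i0 where i0: "i0 \<in> I" "a j0 i0 \<noteq> \<zero>" by blast
    define a' where "a' = (\<lambda>j i. a j i \<ominus> a j i0 \<otimes> inv (a j0 i0) \<otimes> a j0 i)"
    have "card J < card (I - {i0})" using insert i0 by (simp add: card_Diff_singleton)
    moreover have "a' j i \<in> K" if "j \<in> J" "i \<in> I - {i0}" for j i
      unfolding a'_def a_minus_def
      using insert.prems(3)[of j i] insert.prems(3)[of j i0] insert.prems(3)[of j0 i] that i0
        subfield_m_inv(1)[OF K, of "a j0 i0"] insert.prems(3)[of j0 i0]
      by (auto intro!: subringE(5,6,7)[OF subfieldE(1)[OF K]])
    ultimately obtain c where c: "\<forall>i\<in>I - {i0}. c i \<in> K" "\<exists>i\<in>I - {i0}. c i \<noteq> \<zero>"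
        "\<forall>j\<in>J. (\<Oplus>i\<in>I - {i0}. c i \<otimes> a' j i) = \<zero>"
      using insert.IH[of "I - {i0}" a'] insert.prems(1) by auto
    define c' where "c' = c(i0 := \<ominus> (inv (a j0 i0) \<otimes> (\<Oplus>i\<in>I - {i0}. c i \<otimes> a j0 i)))"
    have c_K: "\<And>i. i \<in> I - {i0} \<Longrightarrow> c i \<in> K" using c(1) by blast
    have c_reduced: "\<And>j. j \<in> J \<Longrightarrow>
        (\<Oplus>i\<in>I - {i0}. c i \<otimes> (a j i \<ominus> a j i0 \<otimes> inv (a j0 i0) \<otimes> a j0 i)) = \<zero>"
      using c(3) unfolding a'_def by blast
    note pivot = homogeneous_system_pivot[of K I i0 j0 J a c, OF K insert.prems(1) i0(1) insert.prems(3) i0(2) c_K c_reduced]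
    show ?thesis
      using pivot c(1,2) by (intro exI[of _ c']) (auto simp: c'_def)
  qed
qed

lemma Span_subset_kernel:
  assumes K: "subfield K R" and T: "subring T R" "K \<subseteq> T" and Us: "set Us \<subseteq> T"
    and add: "\<And>x y. x \<in> T \<Longrightarrow> y \<in> T \<Longrightarrow> \<phi> (x \<oplus> y) = \<phi> x \<oplus> \<phi> y"
    and smult: "\<And>a x. a \<in> K \<Longrightarrow> x \<in> T \<Longrightarrow> \<phi> (a \<otimes> x) = a \<otimes> \<phi> x"
    and zero: "\<phi> \<zero> = \<zero>" and vanish: "\<And>u. u \<in> set Us \<Longrightarrow> \<phi> u = \<zero>"
  shows "Span K Us \<subseteq> {x \<in> T. \<phi> x = \<zero>}"
proof
  fix x assume "x \<in> Span K Us"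
  moreover have UsR: "set Us \<subseteq> carrier R" using Us subringE(1)[OF T(1)] by blast
  ultimately obtain Ks where Ks: "set Ks \<subseteq> K" "x = combine Ks Us"
    using Span_eq_combine_set[OF K UsR] by blast
  have "combine Ks Us \<in> T \<and> \<phi> (combine Ks Us) = \<zero>"
    using Ks(1) Us vanish
  proof (induction Ks Us rule: combine.induct)
    case (1 k Ks u Us)
    then have k: "k \<in> K" "k \<in> carrier R" and u: "u \<in> T" "\<phi> u = \<zero>"
      using subfieldE(3)[OF K] by auto
    have IH: "combine Ks Us \<in> T" "\<phi> (combine Ks Us) = \<zero>" using 1 by auto
    have ku: "k \<otimes> u \<in> T" using subringE(6)[OF T(1)] T(2) k(1) u(1) by blast
    have "\<phi> (k \<otimes> u \<oplus> combine Ks Us) = k \<otimes> \<phi> u \<oplus> \<phi> (combine Ks Us)"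
      using add[OF ku IH(1)] smult[OF k(1) u(1)] by simp
    then show ?case using IH ku k(2) u(2) subringE(7)[OF T(1)] by simp
  qed (use zero subringE(2)[OF T(1)] in auto)
  then show "x \<in> {x \<in> T. \<phi> x = \<zero>}" using Ks(2) by simp
qed

subsection \<open>Dedekind's independence of characters\<close>

lemma character_relation_shift:
  assumes T: "\<And>x y. x \<in> T \<Longrightarrow> y \<in> T \<Longrightarrow> x \<otimes> y \<in> T"
    and I: "finite I" "t \<in> I" and y: "y \<in> T" and x: "x \<in> T"
    and f: "\<And>i x. i \<in> I \<Longrightarrow> x \<in> T \<Longrightarrow> f i x \<in> carrier R"
    and f_mult: "\<And>i x y. i \<in> I \<Longrightarrow> x \<in> T \<Longrightarrow> y \<in> T \<Longrightarrow> f i (x \<otimes> y) = f i x \<otimes> f i y"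
    and c: "\<And>i. i \<in> I \<Longrightarrow> c i \<in> carrier R"
    and relation: "\<And>x. x \<in> T \<Longrightarrow> (\<Oplus>i\<in>I. c i \<otimes> f i x) = \<zero>"
  shows "(\<Oplus>i\<in>I - {t}. c i \<otimes> (f i y \<ominus> f t y) \<otimes> f i x) = \<zero>"
proof -
  have "(\<Oplus>i\<in>I. c i \<otimes> (f i y \<ominus> f t y) \<otimes> f i x)
      = (\<Oplus>i\<in>I. c i \<otimes> f i (y \<otimes> x) \<ominus> f t y \<otimes> (c i \<otimes> f i x))"
  proof (rule finsum_cong')
    fix i assume i: "i \<in> I"
    have "c i \<in> carrier R" "f i y \<in> carrier R" "f t y \<in> carrier R" "f i x \<in> carrier R"
      using c f i I(2) x y by auto
    then show "c i \<otimes> (f i y \<ominus> f t y) \<otimes> f i x = c i \<otimes> f i (y \<otimes> x) \<ominus> f t y \<otimes> (c i \<otimes> f i x)"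
      unfolding f_mult[OF i y x] by algebra
  qed (use c f T I x y in auto)
  also have "\<dots> = (\<Oplus>i\<in>I. c i \<otimes> f i (y \<otimes> x)) \<ominus> (\<Oplus>i\<in>I. f t y \<otimes> (c i \<otimes> f i x))"
    using c f T I x y by (intro finsum_diff) auto
  also have "(\<Oplus>i\<in>I. f t y \<otimes> (c i \<otimes> f i x)) = f t y \<otimes> (\<Oplus>i\<in>I. c i \<otimes> f i x)"
    using c f I x y by (intro finsum_rdistr[symmetric]) auto
  also have "(\<Oplus>i\<in>I. c i \<otimes> f i (y \<otimes> x)) \<ominus> f t y \<otimes> (\<Oplus>i\<in>I. c i \<otimes> f i x) = \<zero>"
    using relation[OF T[OF y x]] relation[OF x] f[OF I(2) y] by (simp add: a_minus_def)
  finally have "(\<Oplus>i\<in>I. c i \<otimes> (f i y \<ominus> f t y) \<otimes> f i x) = \<zero>" .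
  moreover have "(\<Oplus>i\<in>I. c i \<otimes> (f i y \<ominus> f t y) \<otimes> f i x)
      = (\<Oplus>i\<in>I - {t}. c i \<otimes> (f i y \<ominus> f t y) \<otimes> f i x)"
    using c f I x y by (intro finsum_remove_zero) (auto simp: a_minus_def r_neg)
  ultimately show ?thesis by simp
qed

lemma characters_independent:
  assumes T: "\<one> \<in> T" "\<And>x y. x \<in> T \<Longrightarrow> y \<in> T \<Longrightarrow> x \<otimes> y \<in> T"
    and I: "finite I"
    and f: "\<And>i x. i \<in> I \<Longrightarrow> x \<in> T \<Longrightarrow> f i x \<in> carrier R"
    and f_mult: "\<And>i x y. i \<in> I \<Longrightarrow> x \<in> T \<Longrightarrow> y \<in> T \<Longrightarrow> f i (x \<otimes> y) = f i x \<otimes> f i y"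
    and f_one: "\<And>i. i \<in> I \<Longrightarrow> f i \<one> = \<one>"
    and f_distinct: "\<And>i j. i \<in> I \<Longrightarrow> j \<in> I \<Longrightarrow> i \<noteq> j \<Longrightarrow> \<exists>x\<in>T. f i x \<noteq> f j x"
    and c: "\<And>i. i \<in> I \<Longrightarrow> c i \<in> carrier R"
    and relation: "\<And>x. x \<in> T \<Longrightarrow> (\<Oplus>i\<in>I. c i \<otimes> f i x) = \<zero>"
    and s: "s \<in> I"
  shows "c s = \<zero>"
proof -
  have "\<forall>c s. (\<forall>i\<in>J. c i \<in> carrier R) \<longrightarrow> (\<forall>x\<in>T. (\<Oplus>i\<in>J. c i \<otimes> f i x) = \<zero>) \<longrightarrow> s \<in> J \<longrightarrow> c s = \<zero>"
    if "J \<subseteq> I" for J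
    using finite_subset[OF that I] that
  proof (induction J rule: finite_psubset_induct)
    case (psubset J)
    show ?case
    proof (intro allI impI)
      fix c s assume c: "\<forall>i\<in>J. c i \<in> carrier R" and rel: "\<forall>x\<in>T. (\<Oplus>i\<in>J. c i \<otimes> f i x) = \<zero>"
        and s: "s \<in> J"
      show "c s = \<zero>"
      proof (cases "J = {s}")
        case True
        then show ?thesis using rel T(1) f_one c psubset.prems s by auto
      next
        case False
        then obtain t where t: "t \<in> J" "t \<noteq> s" using s by blast
        then obtain y where y: "y \<in> T" "f s y \<noteq> f t y" using f_distinct s psubset.prems by blast
        define d where "d = (\<lambda>i. c i \<otimes> (f i y \<ominus> f t y))"
        have sub: "J - {t} \<subset> J" "J - {t} \<subseteq> I" "s \<in> J - {t}" using t s psubset.prems by auto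
        have fJ: "\<And>i x. i \<in> J \<Longrightarrow> x \<in> T \<Longrightarrow> f i x \<in> carrier R" using f psubset.prems by blast
        have cs: "c s \<in> carrier R" "f s y \<ominus> f t y \<in> carrier R" using c s fJ[OF s y(1)] fJ[OF t(1) y(1)] by auto
        have d: "\<And>i. i \<in> J - {t} \<Longrightarrow> d i \<in> carrier R" using c fJ y t unfolding d_def by auto
        have d_relation: "(\<Oplus>i\<in>J - {t}. d i \<otimes> f i x) = \<zero>" if x: "x \<in> T" for x
          unfolding d_def
          by (rule character_relation_shift[OF T(2) psubset.hyps t(1) y(1) x])
            (use fJ f_mult c rel psubset.prems in auto)
        have "d s = \<zero>" using psubset.IH[OF sub(1,2), rule_format, OF d d_relation sub(3)] .
        then have "c s \<otimes> (f s y \<ominus> f t y) = \<zero>" by (simp add: d_def)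
        moreover have "f s y \<ominus> f t y \<noteq> \<zero>"
          using y fJ[OF s y(1)] fJ[OF t(1) y(1)] by (simp add: minus_eq_zero_iff)
        ultimately show ?thesis using integral cs by blast
      qed
    qed
  qed
  from this[OF subset_refl, rule_format] show ?thesis using c relation s by blast
qed

lemma card_embeddings_le_dim:
  assumes K: "subfield K R" and T: "subfield T R" and KT: "K \<subseteq> T" and fd: "finite_dimension K T"
    and I: "finite I"
    and f: "\<And>i x. i \<in> I \<Longrightarrow> x \<in> T \<Longrightarrow> f i x \<in> carrier R"
    and f_add: "\<And>i x y. i \<in> I \<Longrightarrow> x \<in> T \<Longrightarrow> y \<in> T \<Longrightarrow> f i (x \<oplus> y) = f i x \<oplus> f i y"
    and f_mult: "\<And>i x y. i \<in> I \<Longrightarrow> x \<in> T \<Longrightarrow> y \<in> T \<Longrightarrow> f i (x \<otimes> y) = f i x \<otimes> f i y"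
    and f_K: "\<And>i x. i \<in> I \<Longrightarrow> x \<in> K \<Longrightarrow> f i x = x"
    and f_distinct: "\<And>i j. i \<in> I \<Longrightarrow> j \<in> I \<Longrightarrow> i \<noteq> j \<Longrightarrow> \<exists>x\<in>T. f i x \<noteq> f j x"
  shows "card I \<le> dim K T"
proof (rule ccontr)
  assume "\<not> card I \<le> dim K T"
  then have lt: "card {..<dim K T} < card I" by simp
  note Tsub = subfieldE(1)[OF T] and KR = subfieldE(3)[OF K]
  obtain Bs where Bs: "set Bs \<subseteq> carrier R" "length Bs = dim K T" "Span K Bs = T"
    using exists_base[OF K finite_dimensionE[OF K fd]] unfolding over_def by auto
  have BsT: "set Bs \<subseteq> T" using Span_base_incl[OF K Bs(1)] Bs(3) by auto
  obtain c where c: "\<forall>i\<in>I. c i \<in> carrier R" "\<exists>i\<in>I. c i \<noteq> \<zero>"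
      "\<forall>j\<in>{..<dim K T}. (\<Oplus>i\<in>I. c i \<otimes> f i (Bs ! j)) = \<zero>"
    using homogeneous_system_nontrivial_solution[OF carrier_is_subfield finite_lessThan I lt,
        of "\<lambda>j i. f i (Bs ! j)"] f BsT Bs(2) by (auto simp: subset_iff)
  have "T \<subseteq> {x \<in> T. (\<Oplus>i\<in>I. c i \<otimes> f i x) = \<zero>}"
  proof (subst Bs(3)[symmetric], rule Span_subset_kernel[OF K Tsub KT BsT])
    show "(\<Oplus>i\<in>I. c i \<otimes> f i (x \<oplus> y)) = (\<Oplus>i\<in>I. c i \<otimes> f i x) \<oplus> (\<Oplus>i\<in>I. c i \<otimes> f i y)"
      if "x \<in> T" "y \<in> T" for x y
    proof -
      have "(\<Oplus>i\<in>I. c i \<otimes> f i (x \<oplus> y)) = (\<Oplus>i\<in>I. c i \<otimes> f i x \<oplus> c i \<otimes> f i y)"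
        using that c f f_add by (intro finsum_cong') (auto simp: r_distr)
      then show ?thesis using that c f by (simp add: finsum_addf Pi_def)
    qed
    show "(\<Oplus>i\<in>I. c i \<otimes> f i (a \<otimes> x)) = a \<otimes> (\<Oplus>i\<in>I. c i \<otimes> f i x)"
      if "a \<in> K" "x \<in> T" for a x
    proof -
      have "(\<Oplus>i\<in>I. c i \<otimes> f i (a \<otimes> x)) = (\<Oplus>i\<in>I. a \<otimes> (c i \<otimes> f i x))"
      proof (rule finsum_cong')
        fix i assume i: "i \<in> I"
        have "f i (a \<otimes> x) = a \<otimes> f i x" using f_mult[OF i _ that(2)] f_K[OF i that(1)] KT that(1) by auto
        then show "c i \<otimes> f i (a \<otimes> x) = a \<otimes> (c i \<otimes> f i x)"
          using c i f[OF i that(2)] KR that(1) by (auto simp: m_lcomm)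
      qed (use that c f KR in auto)
      also have "\<dots> = a \<otimes> (\<Oplus>i\<in>I. c i \<otimes> f i x)"
        using that c f KR I by (intro finsum_rdistr[symmetric]) auto
      finally show ?thesis .
    qed
    show "(\<Oplus>i\<in>I. c i \<otimes> f i \<zero>) = \<zero>"
      using f_K subringE(2)[OF subfieldE(1)[OF K]] c by (intro add.finprod_one_eqI) auto
    show "(\<Oplus>i\<in>I. c i \<otimes> f i u) = \<zero>" if "u \<in> set Bs" for u
      using that c(3) Bs(2) by (auto simp: in_set_conv_nth)
  qed
  note kernel = this
  have f_one: "\<And>i. i \<in> I \<Longrightarrow> f i \<one> = \<one>"
    using f_K subringE(3)[OF subfieldE(1)[OF K]] by blast
  have "c i = \<zero>" if "i \<in> I" for i
    by (rule characters_independent[OF subringE(3)[OF Tsub] subringE(6)[OF Tsub] I f f_mult f_one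
          f_distinct _ _ that]) (use c(1) kernel in auto)
  then show False using c(2) by blast
qed

context
  fixes L g assumes L: "subfield L R" and g: "field_endo R L g"
begin

lemma endo_closed: "x \<in> L \<Longrightarrow> g x \<in> L"
  using g unfolding field_endo_def by auto

lemma endo_carrier: "x \<in> L \<Longrightarrow> g x \<in> carrier R"
  using endo_closed subfieldE(3)[OF L] by blast

lemma endo_add: "x \<in> L \<Longrightarrow> y \<in> L \<Longrightarrow> g (x \<oplus> y) = g x \<oplus> g y"
  using g unfolding field_endo_def by auto

lemma endo_mult: "x \<in> L \<Longrightarrow> y \<in> L \<Longrightarrow> g (x \<otimes> y) = g x \<otimes> g y"
  using g unfolding field_endo_def by auto

lemma endo_one: "g \<one> = \<one>"
  using g unfolding field_endo_def by auto

lemma endo_zero: "g \<zero> = \<zero>"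
proof -
  have z: "\<zero> \<in> L" using subringE(2)[OF subfieldE(1)[OF L]] .
  have "g \<zero> \<oplus> g \<zero> = g \<zero>" using endo_add[OF z z] by simp
  then show ?thesis using add.l_cancel_one[OF endo_carrier[OF z] endo_carrier[OF z]] by simp
qed

lemma endo_neg: "x \<in> L \<Longrightarrow> g (\<ominus> x) = \<ominus> g x"
proof -
  assume x: "x \<in> L"
  have nx: "\<ominus> x \<in> L" using subringE(5)[OF subfieldE(1)[OF L] x] .
  have "g (\<ominus> x) \<oplus> g x = \<zero>"
    using endo_add[OF nx x] endo_zero x subfieldE(3)[OF L] by (auto simp: l_neg)
  from minus_equality[OF this endo_carrier[OF x] endo_carrier[OF nx]] show ?thesis by simp
qed

lemma endo_minus: "x \<in> L \<Longrightarrow> y \<in> L \<Longrightarrow> g (x \<ominus> y) = g x \<ominus> g y"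
  using endo_add endo_neg subringE(5)[OF subfieldE(1)[OF L]] by (simp add: a_minus_def)

lemma endo_inv: "x \<in> L \<Longrightarrow> x \<noteq> \<zero> \<Longrightarrow> g (inv x) = inv (g x)"
proof -
  assume x: "x \<in> L" "x \<noteq> \<zero>"
  have ix: "inv x \<in> L" "x \<otimes> inv x = \<one>" using subfield_m_inv[OF L] x by auto
  have "g x \<otimes> g (inv x) = \<one>" using endo_mult[OF x(1) ix(1)] ix(2) endo_one by simp
  from comm_inv_char[OF endo_carrier[OF x(1)] endo_carrier[OF ix(1)] this] show ?thesis by simp
qed

lemma endo_inj: "x \<in> L \<Longrightarrow> y \<in> L \<Longrightarrow> g x = g y \<Longrightarrow> x = y"
proof (rule ccontr)
  assume xy: "x \<in> L" "y \<in> L" "g x = g y" and "x \<noteq> y"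
  define d where "d = x \<ominus> y"
  have d: "d \<in> L" "d \<noteq> \<zero>"
  proof -
    show "d \<in> L" using xy(1,2) subringE(5,7)[OF subfieldE(1)[OF L]] unfolding d_def a_minus_def by blast
    show "d \<noteq> \<zero>" using xy(1,2) \<open>x \<noteq> y\<close> minus_eq_zero_iff subfieldE(3)[OF L] unfolding d_def by blast
  qed
  have "g d = \<zero>" using endo_minus[OF xy(1,2)] xy(3) endo_carrier[OF xy(2)] by (simp add: d_def a_minus_def r_neg)
  moreover have inv_d: "inv d \<in> L" "d \<otimes> inv d = \<one>" using subfield_m_inv[OF L, of d] d by auto
  then have "g d \<otimes> g (inv d) = \<one>" using endo_mult[OF d(1) inv_d(1)] endo_one by simp
  ultimately show False using endo_carrier subfield_m_inv(1)[OF L, of d] d by auto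
qed

lemma endo_finsum:
  "finite I \<Longrightarrow> (\<And>i. i \<in> I \<Longrightarrow> f i \<in> L) \<Longrightarrow> g (finsum R f I) = (\<Oplus>i\<in>I. g (f i))"
proof (induct I rule: finite_induct)
  case empty
  then show ?case using endo_zero by simp
next
  case (insert x F)
  have "f \<in> F \<rightarrow> carrier R" "f x \<in> carrier R" "(\<lambda>i. g (f i)) \<in> F \<rightarrow> carrier R" "g (f x) \<in> carrier R"
    using insert subfieldE(3)[OF L] endo_carrier by auto
  moreover have "finsum R f F \<in> L" using insert by (intro finsum_in_subring[OF subfieldE(1)[OF L]]) auto
  ultimately show ?case using insert endo_add by simp
qed

lemma fixed_points_subfield: "subfield {x \<in> L. g x = x} R"
proof (rule subfieldI')
  note Lsub = subfieldE(1)[OF L]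
  show "subring {x \<in> L. g x = x} R"
    by (rule subringI)
      (use subringE[OF Lsub] endo_one endo_neg endo_mult endo_add in auto)
  show "\<And>x. x \<in> {x \<in> L. g x = x} - {\<zero>} \<Longrightarrow> inv x \<in> {x \<in> L. g x = x}"
    using subfield_m_inv(1)[OF L] endo_inv by auto
qed

end

lemma field_endo_funpow:
  assumes "subfield L R" "field_endo R L g" shows "field_endo R L (g ^^ n)"
proof (induct n)
  case 0
  then show ?case unfolding field_endo_def by simp
next
  case (Suc n)
  then show ?case
    using endo_closed[OF assms] endo_add[OF assms] endo_mult[OF assms] endo_one[OF assms]
      endo_closed[OF assms(1) Suc] endo_add[OF assms(1) Suc] endo_mult[OF assms(1) Suc]
      endo_one[OF assms(1) Suc]
    unfolding field_endo_def by simp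
qed

lemma subfield_subalgebra:
  assumes "subfield L R" "K \<subseteq> L" shows "subalgebra K L R"
proof -
  have s: "subring L R" using subfieldE(1)[OF assms(1)] .
  show ?thesis
    by (intro subalgebra.intro subring.axioms(1)[OF s])
       (unfold subalgebra_axioms_def, use subringE(6)[OF s] assms(2) in blast)
qed

lemma finite_dimension_top:
  assumes k: "subfield k R" and K: "subfield K R" and L: "subfield L R"
    and kK: "k \<subseteq> K" and KL: "K \<subseteq> L" and fd: "finite_dimension k L"
  shows "finite_dimension K L"
proof -
  obtain Bs where Bs: "set Bs \<subseteq> carrier R" "Span k Bs = L"
    using exists_base[OF k finite_dimensionE[OF k fd]] by auto
  have "Span k Bs \<subseteq> Span K Bs"
  proof
    fix x assume "x \<in> Span k Bs"
    then obtain Ks where "set Ks \<subseteq> k" "x = combine Ks Bs"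
      using Span_eq_combine_set[OF k Bs(1)] by auto
    then show "x \<in> Span K Bs" using kK Span_eq_combine_set[OF K Bs(1)] by blast
  qed
  moreover have "Span K Bs \<subseteq> L"
    using Span_base_incl[OF k Bs(1)] Bs(2) subalgebra_Span_incl[OF K subfield_subalgebra[OF L KL]]
    by auto
  ultimately have "Span K Bs = L" using Bs(2) by auto
  then show ?thesis using Span_finite_dimension[OF K Bs(1)] by simp
qed

lemma finite_dimension_bottom:
  assumes k: "subfield k R" and T: "subfield T R" and kT: "k \<subseteq> T" and TL: "T \<subseteq> L"
    and fd: "finite_dimension k L"
  shows "finite_dimension k T"
  using subalbegra_incl_imp_finite_dimension[OF k fd subfield_subalgebra[OF T kT] TL] .

lemma dim_mono:
  assumes K: "subfield K R" and fd: "finite_dimension K F" "finite_dimension K E" and EF: "E \<subseteq> F"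
  shows "dim K E \<le> dim K F"
proof -
  obtain Bs where Bs: "set Bs \<subseteq> carrier R" "independent K Bs" "length Bs = dim K E" "Span K Bs = E"
    using exists_base[OF K finite_dimensionE[OF K fd(2)]] unfolding over_def by auto
  have "set Bs \<subseteq> F" using Span_base_incl[OF K Bs(1)] Bs(4) EF by auto
  then show ?thesis
    using independent_length_le_dimension[OF K finite_dimensionE[OF K fd(1)] Bs(2)] Bs(3)
    unfolding over_def by simp
qed

lemma dim_eq_imp_eq:
  assumes K: "subfield K R" and fd: "finite_dimension K F" "finite_dimension K E" and EF: "E \<subseteq> F"
    and eq: "dim K E = dim K F"
  shows "E = F"
proof -
  obtain Bs where Bs: "set Bs \<subseteq> carrier R" "independent K Bs" "length Bs = dim K E" "Span K Bs = E"
    using exists_base[OF K finite_dimensionE[OF K fd(2)]] unfolding over_def by auto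
  have "set Bs \<subseteq> F" using Span_base_incl[OF K Bs(1)] Bs(4) EF by auto
  then have "Span K Bs = F"
    using independent_length_eq_dimension[OF K finite_dimensionE[OF K fd(1)] Bs(2)] Bs(3) eq
    unfolding over_def by simp
  then show ?thesis using Bs(4) by simp
qed

lemma dim_tower:
  assumes k: "subfield k R" and K: "subfield K R" and L: "subfield L R"
    and kK: "k \<subseteq> K" and KL: "K \<subseteq> L" and fd: "finite_dimension k L"
  shows "dim k L = dim k K * dim K L"
  using telescopic_base_dim(2)[OF k K finite_dimension_bottom[OF k K kK KL fd]
      finite_dimension_top[OF k K L kK KL fd]]
  unfolding over_def by simp

lemma combine_eq_finsum:
  "length Ks = length Us \<Longrightarrow> set Ks \<subseteq> carrier R \<Longrightarrow> set Us \<subseteq> carrier R \<Longrightarrow>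
   combine Ks Us = (\<Oplus>i\<in>{..<length Us}. Ks ! i \<otimes> Us ! i)"
proof (induct Us arbitrary: Ks)
  case Nil
  then show ?case by simp
next
  case (Cons u Us)
  then obtain k Ks' where Ks: "Ks = k # Ks'" by (cases Ks) auto
  have len: "length Ks' = length Us" using Cons Ks by simp
  have c: "set Ks' \<subseteq> carrier R" "set Us \<subseteq> carrier R" "k \<in> carrier R" "u \<in> carrier R"
    using Cons Ks by auto
  have "(\<Oplus>i\<in>{..<length (u # Us)}. Ks ! i \<otimes> (u # Us) ! i)
      = (\<Oplus>i\<in>insert 0 (Suc ` {..<length Us}). Ks ! i \<otimes> (u # Us) ! i)"
    by (simp only: length_Cons lessThan_Suc_eq_insert_0)
  also have "\<dots> = k \<otimes> u \<oplus> (\<Oplus>i\<in>Suc ` {..<length Us}. Ks ! i \<otimes> (u # Us) ! i)"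
    using c len unfolding Ks by (subst finsum_insert) (auto simp: Pi_def nth_mem subsetD)
  also have "(\<Oplus>i\<in>Suc ` {..<length Us}. Ks ! i \<otimes> (u # Us) ! i) = (\<Oplus>i\<in>{..<length Us}. Ks' ! i \<otimes> Us ! i)"
    using c len unfolding Ks by (subst finsum_reindex) (auto simp: Pi_def nth_mem subsetD)
  finally show ?case using Cons(1)[OF len c(1,2)] unfolding Ks by simp
qed

lemma independent_finsum_eq_zero:
  assumes K: "subfield K R" and ind: "independent K Us"
    and c: "\<And>i. i < length Us \<Longrightarrow> c i \<in> K"
    and zero: "(\<Oplus>i\<in>{..<length Us}. c i \<otimes> Us ! i) = \<zero>"
    and i: "i < length Us"
  shows "c i = \<zero>"
proof -
  define Ks where "Ks = map c [0..<length Us]"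
  have KsK: "set Ks \<subseteq> K" unfolding Ks_def using c by auto
  have UsR: "set Us \<subseteq> carrier R" using independent_in_carrier[OF ind] .
  have "combine Ks Us = (\<Oplus>i\<in>{..<length Us}. Ks ! i \<otimes> Us ! i)"
    using KsK subfieldE(3)[OF K] UsR by (intro combine_eq_finsum) (auto simp: Ks_def)
  also have "\<dots> = (\<Oplus>i\<in>{..<length Us}. c i \<otimes> Us ! i)"
    using c subfieldE(3)[OF K] UsR by (intro finsum_cong') (auto simp: Ks_def nth_mem subsetD)
  finally have "set (take (length Us) Ks) \<subseteq> {\<zero>}"
    using independent_imp_trivial_combine[OF K ind KsK] zero by simp
  then show ?thesis using i unfolding Ks_def by (auto simp: image_subset_iff)
qed

subsection \<open>Artin's bound\<close>

context
  fixes L g m assumes L: "subfield L R" and g: "field_endo R L g" and m: "0 < m"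
    and periodic: "\<And>x. x \<in> L \<Longrightarrow> (g ^^ m) x = x"
begin

lemma orbit_relation_carrier:
  "orbit_relation L g m Us c \<Longrightarrow> i < length Us \<Longrightarrow> c i \<in> carrier R"
  using subfieldE(3)[OF L] unfolding orbit_relation_def by blast

lemma orbit_relation_smult:
  assumes UsL: "set Us \<subseteq> L" and c: "orbit_relation L g m Us c" and b: "b \<in> L"
  shows "orbit_relation L g m Us (\<lambda>i. b \<otimes> c i)"
  unfolding orbit_relation_def
proof (intro conjI allI impI)
  have bR: "b \<in> carrier R" using b subfieldE(3)[OF L] by blast
  have uR: "\<And>j i. i < length Us \<Longrightarrow> (g ^^ j) (Us ! i) \<in> carrier R"
    using endo_carrier[OF L field_endo_funpow[OF L g]] UsL nth_mem by blast
  show "b \<otimes> c i \<in> L" if "i < length Us" for i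
    using c that b subringE(6)[OF subfieldE(1)[OF L]] unfolding orbit_relation_def by blast
  fix j assume j: "j < m"
  have "(\<Oplus>i\<in>{..<length Us}. b \<otimes> c i \<otimes> (g ^^ j) (Us ! i))
      = (\<Oplus>i\<in>{..<length Us}. b \<otimes> (c i \<otimes> (g ^^ j) (Us ! i)))"
    using bR uR orbit_relation_carrier[OF c] by (intro finsum_cong') (auto simp: m_assoc)
  also have "\<dots> = b \<otimes> (\<Oplus>i\<in>{..<length Us}. c i \<otimes> (g ^^ j) (Us ! i))"
    using bR uR orbit_relation_carrier[OF c] by (intro finsum_rdistr[symmetric]) auto
  finally show "(\<Oplus>i\<in>{..<length Us}. b \<otimes> c i \<otimes> (g ^^ j) (Us ! i)) = \<zero>"
    using c j bR unfolding orbit_relation_def by simp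
qed

lemma orbit_relation_diff:
  assumes UsL: "set Us \<subseteq> L" and c: "orbit_relation L g m Us c" and d: "orbit_relation L g m Us d"
  shows "orbit_relation L g m Us (\<lambda>i. c i \<ominus> d i)"
  unfolding orbit_relation_def
proof (intro conjI allI impI)
  have uR: "\<And>j i. i < length Us \<Longrightarrow> (g ^^ j) (Us ! i) \<in> carrier R"
    using endo_carrier[OF L field_endo_funpow[OF L g]] UsL nth_mem by blast
  note cR = orbit_relation_carrier[OF c] and dR = orbit_relation_carrier[OF d]
  show "c i \<ominus> d i \<in> L" if "i < length Us" for i
    using c d that subringE(5,7)[OF subfieldE(1)[OF L]] unfolding orbit_relation_def a_minus_def
    by blast
  fix j assume j: "j < m"
  have "(\<Oplus>i\<in>{..<length Us}. (c i \<ominus> d i) \<otimes> (g ^^ j) (Us ! i))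
      = (\<Oplus>i\<in>{..<length Us}. c i \<otimes> (g ^^ j) (Us ! i) \<ominus> d i \<otimes> (g ^^ j) (Us ! i))"
    using uR cR dR by (intro finsum_cong') (auto simp: a_minus_def l_distr l_minus)
  also have "\<dots> = (\<Oplus>i\<in>{..<length Us}. c i \<otimes> (g ^^ j) (Us ! i))
      \<ominus> (\<Oplus>i\<in>{..<length Us}. d i \<otimes> (g ^^ j) (Us ! i))"
    using uR cR dR by (intro finsum_diff) auto
  finally show "(\<Oplus>i\<in>{..<length Us}. (c i \<ominus> d i) \<otimes> (g ^^ j) (Us ! i)) = \<zero>"
    using c d j unfolding orbit_relation_def by (simp add: a_minus_def)
qed

text \<open>Applying \<open>g\<close> permutes the rows \<open>g\<^sup>0, \<dots>, g\<^sup>m\<^sup>-\<^sup>1\<close> cyclically, because \<open>g\<^sup>m\<close> is the identity on \<open>L\<close>.\<close>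

lemma orbit_relation_endo:
  assumes UsL: "set Us \<subseteq> L" and c: "orbit_relation L g m Us c"
  shows "orbit_relation L g m Us (\<lambda>i. g (c i))"
  unfolding orbit_relation_def
proof (intro conjI allI impI)
  have cL: "\<And>i. i < length Us \<Longrightarrow> c i \<in> L" using c unfolding orbit_relation_def by blast
  have uL: "\<And>j i. i < length Us \<Longrightarrow> (g ^^ j) (Us ! i) \<in> L"
    using endo_closed[OF L field_endo_funpow[OF L g]] UsL nth_mem by blast
  note cuL = subringE(6)[OF subfieldE(1)[OF L] cL uL]
  show "g (c i) \<in> L" if "i < length Us" for i using endo_closed[OF L g cL[OF that]] .
  fix j assume j: "j < m"
  obtain j' where j': "j' < m" "\<And>i. i < length Us \<Longrightarrow> (g ^^ j) (Us ! i) = g ((g ^^ j') (Us ! i))"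
  proof (cases j)
    case 0
    have "(g ^^ j) (Us ! i) = g ((g ^^ (m - 1)) (Us ! i))" if "i < length Us" for i
    proof -
      have "Us ! i \<in> L" using UsL nth_mem[OF that] by blast
      then have "(g ^^ j) (Us ! i) = (g ^^ m) (Us ! i)" using periodic 0 by simp
      also have "\<dots> = g ((g ^^ (m - 1)) (Us ! i))"
        using m by (metis Suc_diff_1 comp_apply funpow.simps(2))
      finally show ?thesis .
    qed
    then show thesis using that[of "m - 1"] m by simp
  next
    case (Suc j')
    then show thesis using that[of j'] j by auto
  qed
  have "(\<Oplus>i\<in>{..<length Us}. g (c i) \<otimes> (g ^^ j) (Us ! i))
      = (\<Oplus>i\<in>{..<length Us}. g (c i \<otimes> (g ^^ j') (Us ! i)))"
    using j'(2) endo_mult[OF L g cL uL] endo_carrier[OF L g cuL] by (intro finsum_cong') auto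
  also have "\<dots> = g (\<Oplus>i\<in>{..<length Us}. c i \<otimes> (g ^^ j') (Us ! i))"
    using endo_finsum[OF L g, of "{..<length Us}"] cuL by simp
  also have "\<dots> = \<zero>" using c j'(1) endo_zero[OF L g] unfolding orbit_relation_def by simp
  finally show "(\<Oplus>i\<in>{..<length Us}. g (c i) \<otimes> (g ^^ j) (Us ! i)) = \<zero>" .
qed

text \<open>A nonzero relation of minimal support, normalised to have a coefficient \<open>\<one>\<close>, is fixed by \<open>g\<close>:
  otherwise its difference with its image under \<open>g\<close> would be a nonzero relation of smaller support.\<close>

lemma minimal_orbit_relation_fixed:
  assumes UsL: "set Us \<subseteq> L" and c: "orbit_relation L g m Us c"
    and i0: "i0 < length Us" "c i0 = \<one>"
    and minimal: "\<And>d. orbit_relation L g m Us d \<Longrightarrow> (\<exists>i<length Us. d i \<noteq> \<zero>) \<Longrightarrow>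
      card {i. i < length Us \<and> c i \<noteq> \<zero>} \<le> card {i. i < length Us \<and> d i \<noteq> \<zero>}"
    and i: "i < length Us"
  shows "g (c i) = c i"
proof -
  define d where "d = (\<lambda>i. c i \<ominus> g (c i))"
  have cL: "\<And>i. i < length Us \<Longrightarrow> c i \<in> L" using c unfolding orbit_relation_def by blast
  have cR: "\<And>i. i < length Us \<Longrightarrow> c i \<in> carrier R" "\<And>i. i < length Us \<Longrightarrow> g (c i) \<in> carrier R"
    using orbit_relation_carrier[OF c] endo_carrier[OF L g cL] by auto
  have d: "orbit_relation L g m Us d"
    unfolding d_def by (rule orbit_relation_diff[OF UsL c orbit_relation_endo[OF UsL c]])
  have "{i. i < length Us \<and> d i \<noteq> \<zero>} \<subseteq> {i. i < length Us \<and> c i \<noteq> \<zero>} - {i0}"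
    using i0 endo_one[OF L g] endo_zero[OF L g] cR by (auto simp: d_def a_minus_def r_neg)
  then have "card {i. i < length Us \<and> d i \<noteq> \<zero>} < card {i. i < length Us \<and> c i \<noteq> \<zero>}"
    using i0 by (intro le_less_trans[OF card_mono card_Diff1_less]) auto
  then have "d i = \<zero>" using minimal[OF d] i by fastforce
  then show ?thesis using cR i by (simp add: d_def minus_eq_zero_iff)
qed

lemma artin_independent_length_le:
  assumes ind: "independent {x \<in> L. g x = x} Us" and UsL: "set Us \<subseteq> L"
  shows "length Us \<le> m"
proof (rule ccontr)
  let ?n = "length Us" and ?supp = "\<lambda>c. card {i. i < length Us \<and> c i \<noteq> \<zero>}"
  let ?Q = "\<lambda>c. orbit_relation L g m Us c \<and> (\<exists>i<length Us. c i \<noteq> \<zero>)"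
  assume "\<not> ?n \<le> m"
  then have lt: "card {..<m} < card {..<?n}" by simp
  have entries: "(g ^^ j) (Us ! i) \<in> L" if "j \<in> {..<m}" "i \<in> {..<?n}" for j i
  proof -
    have "Us ! i \<in> L" using UsL nth_mem that by auto
    then show ?thesis by (rule endo_closed[OF L field_endo_funpow[OF L g]])
  qed
  obtain c0 where "\<forall>i\<in>{..<?n}. c0 i \<in> L" "\<exists>i\<in>{..<?n}. c0 i \<noteq> \<zero>"
      "\<forall>j\<in>{..<m}. (\<Oplus>i\<in>{..<?n}. c0 i \<otimes> (g ^^ j) (Us ! i)) = \<zero>"
    using homogeneous_system_nontrivial_solution[where a = "\<lambda>j i. (g ^^ j) (Us ! i)",
        OF L finite_lessThan finite_lessThan lt entries] by blast
  then have "?Q c0" unfolding orbit_relation_def by auto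
  from ex_has_least_nat[of ?Q c0 ?supp, OF this]
  obtain c where c: "orbit_relation L g m Us c" "\<exists>i<?n. c i \<noteq> \<zero>"
    and c_min: "\<And>d. ?Q d \<Longrightarrow> ?supp c \<le> ?supp d"
    by blast
  then obtain i0 where i0: "i0 < ?n" "c i0 \<noteq> \<zero>" by blast
  have c_i0: "c i0 \<in> L" using c(1) i0(1) unfolding orbit_relation_def by blast
  define b where "b = inv (c i0)"
  have b: "b \<in> L" "b \<otimes> c i0 = \<one>" "b \<noteq> \<zero>"
    using subfield_m_inv[OF L, of "c i0"] c_i0 i0(2) unfolding b_def by auto
  have bR: "b \<in> carrier R" using b(1) subfieldE(3)[OF L] by blast
  define c' where "c' = (\<lambda>i. b \<otimes> c i)"
  have c': "orbit_relation L g m Us c'" unfolding c'_def by (rule orbit_relation_smult[OF UsL c(1) b(1)])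
  have "c' i = \<zero> \<longleftrightarrow> c i = \<zero>" if "i < ?n" for i
    using integral_iff[OF bR orbit_relation_carrier[OF c(1) that]] b(3) by (simp add: c'_def)
  then have supp_eq: "?supp c' = ?supp c" by (metis (mono_tags, lifting))
  have fixed: "g (c' i) = c' i" if "i < ?n" for i
  proof (rule minimal_orbit_relation_fixed[OF UsL c' i0(1) _ _ that])
    show "c' i0 = \<one>" using b(2) by (simp add: c'_def)
    show "?supp c' \<le> ?supp d" if "orbit_relation L g m Us d" "\<exists>i<?n. d i \<noteq> \<zero>" for d
      using c_min[of d] that supp_eq by simp
  qed
  have "(\<Oplus>i\<in>{..<?n}. c' i \<otimes> (g ^^ 0) (Us ! i)) = \<zero>" using c' m unfolding orbit_relation_def by blast
  then have "(\<Oplus>i\<in>{..<?n}. c' i \<otimes> Us ! i) = \<zero>" by simp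
  moreover have "c' i \<in> {x \<in> L. g x = x}" if "i < ?n" for i
    using c' fixed[OF that] that unfolding orbit_relation_def by blast
  ultimately have "c' i0 = \<zero>"
    using independent_finsum_eq_zero[OF fixed_points_subfield[OF L g] ind _ _ i0(1)] by blast
  then show False using b(2) by (simp add: c'_def)
qed

lemma artin_dim:
  assumes fd: "finite_dimension {x \<in> L. g x = x} L"
  shows "dim {x \<in> L. g x = x} L \<le> m"
proof -
  note K = fixed_points_subfield[OF L g]
  obtain Bs where Bs: "set Bs \<subseteq> carrier R" "independent {x \<in> L. g x = x} Bs"
      "length Bs = dim {x \<in> L. g x = x} L" "Span {x \<in> L. g x = x} Bs = L"
    using exists_base[OF K finite_dimensionE[OF K fd]] unfolding over_def by auto
  have "set Bs \<subseteq> L" using Span_base_incl[OF K Bs(1)] Bs(4) by auto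
  then show ?thesis using artin_independent_length_le[OF Bs(2)] Bs(3) by simp
qed

end

end


lemma mem_interm: "T \<in> interm R K L \<longleftrightarrow> subfield T R \<and> K \<subseteq> T \<and> T \<subseteq> L"
  unfolding interm_def by simp

locale cyclic_galois = field R for R (structure) +
  fixes k L \<sigma>
  assumes k: "subfield k R" and L: "subfield L R" and kL: "k \<subseteq> L"
    and finite_dim: "finite_dimension k L"
    and endo: "field_endo R L \<sigma>" and fixed_field_\<sigma>: "{x \<in> L. \<sigma> x = x} = k"
begin

abbreviation r :: nat where "r \<equiv> dim k L"

definition fixed_field :: "nat \<Rightarrow> 'a set" where
  "fixed_field t = {x \<in> L. (\<sigma> ^^ t) x = x}"

definition period :: "'a set \<Rightarrow> nat" where
  "period T = (LEAST e. 0 < e \<and> (\<forall>x\<in>T. (\<sigma> ^^ e) x = x))"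

lemma pow_endo: "field_endo R L (\<sigma> ^^ n)"
  using field_endo_funpow[OF L endo] .

lemma pow_fixes_k: "x \<in> k \<Longrightarrow> (\<sigma> ^^ n) x = x"
  using fixed_field_\<sigma> by (induct n) auto

lemma pow_mult_fixes: "(\<sigma> ^^ e) x = x \<Longrightarrow> (\<sigma> ^^ (e * q)) x = x"
  by (induct q) (simp_all add: funpow_add)

lemma pow_cancel:
  assumes "i < j" "T \<subseteq> L" "\<forall>x\<in>T. (\<sigma> ^^ i) x = (\<sigma> ^^ j) x"
  shows "\<forall>x\<in>T. (\<sigma> ^^ (j - i)) x = x"
proof
  fix x assume x: "x \<in> T"
  then have xL: "x \<in> L" using assms(2) by blast
  have "(\<sigma> ^^ i) ((\<sigma> ^^ (j - i)) x) = (\<sigma> ^^ i) x"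
    using assms(1,3) x by (simp add: funpow_add[symmetric, THEN fun_cong, simplified])
  then show "(\<sigma> ^^ (j - i)) x = x"
    using endo_inj[OF L pow_endo endo_closed[OF L pow_endo xL] xL] by blast
qed

lemma pow_embeddings_le_dim:
  assumes T: "T \<in> interm R k L" and I: "finite I"
    and distinct: "\<And>i j. i \<in> I \<Longrightarrow> j \<in> I \<Longrightarrow> i \<noteq> j \<Longrightarrow> \<exists>x\<in>T. (\<sigma> ^^ i) x \<noteq> (\<sigma> ^^ j) x"
  shows "card I \<le> dim k T"
proof -
  have T': "subfield T R" "k \<subseteq> T" "T \<subseteq> L" using T by (auto simp: mem_interm)
  show ?thesis
  proof (rule card_embeddings_le_dim[OF k T'(1,2) finite_dimension_bottom[OF k T' finite_dim] I,
        where f = "\<lambda>i. \<sigma> ^^ i"])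
    fix i x y assume "x \<in> T" "y \<in> T"
    then have "x \<in> L" "y \<in> L" using T'(3) by auto
    then show "(\<sigma> ^^ i) x \<in> carrier R" "(\<sigma> ^^ i) (x \<oplus> y) = (\<sigma> ^^ i) x \<oplus> (\<sigma> ^^ i) y"
      "(\<sigma> ^^ i) (x \<otimes> y) = (\<sigma> ^^ i) x \<otimes> (\<sigma> ^^ i) y"
      by (auto simp: endo_carrier[OF L pow_endo] endo_add[OF L pow_endo] endo_mult[OF L pow_endo])
  qed (use pow_fixes_k distinct in auto)
qed

lemma periodic: "\<exists>e>0. \<forall>x\<in>L. (\<sigma> ^^ e) x = x"
proof (rule ccontr)
  assume aperiodic: "\<not> (\<exists>e>0. \<forall>x\<in>L. (\<sigma> ^^ e) x = x)"
  have "\<exists>x\<in>L. (\<sigma> ^^ i) x \<noteq> (\<sigma> ^^ j) x" if "i < j" for i j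
    using pow_cancel[OF that subset_refl] aperiodic that by (meson zero_less_diff)
  then have "\<exists>x\<in>L. (\<sigma> ^^ i) x \<noteq> (\<sigma> ^^ j) x" if "i \<noteq> j" for i j
    using that by (metis linorder_neqE_nat)
  then have "card {..r} \<le> r"
    using pow_embeddings_le_dim[of L "{..r}"] k L kL by (simp add: mem_interm)
  then show False by simp
qed

lemma period:
  assumes "T \<subseteq> L" shows "0 < period T" "\<forall>x\<in>T. (\<sigma> ^^ period T) x = x"
proof -
  obtain e where "0 < e" "\<forall>x\<in>T. (\<sigma> ^^ e) x = x" using periodic assms by blast
  from LeastI[of "\<lambda>e. 0 < e \<and> (\<forall>x\<in>T. (\<sigma> ^^ e) x = x)", OF conjI[OF this]]
  show "0 < period T" "\<forall>x\<in>T. (\<sigma> ^^ period T) x = x" unfolding period_def by auto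
qed

lemma period_least: "0 < e \<Longrightarrow> \<forall>x\<in>T. (\<sigma> ^^ e) x = x \<Longrightarrow> period T \<le> e"
  unfolding period_def by (rule Least_le) simp

lemma pow_distinct_below_period:
  assumes T: "T \<subseteq> L" and ij: "i < period T" "j < period T" "i \<noteq> j"
  shows "\<exists>x\<in>T. (\<sigma> ^^ i) x \<noteq> (\<sigma> ^^ j) x"
proof -
  have "\<exists>x\<in>T. (\<sigma> ^^ i) x \<noteq> (\<sigma> ^^ j) x" if "i < j" "j < period T" for i j
    using pow_cancel[OF that(1) T] period_least[of "j - i" T] that by fastforce
  then show ?thesis using ij by (metis linorder_neqE_nat)
qed

lemma period_le_dim: "T \<in> interm R k L \<Longrightarrow> period T \<le> dim k T"
  using pow_embeddings_le_dim[of T "{..<period T}"] pow_distinct_below_period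
  by (simp add: mem_interm)

text \<open>Artin's bound shows that the order of \<open>\<sigma>\<close> is at least \<open>[L:k]\<close>; Dedekind's lemma gives the
  converse.\<close>

lemma period_L: "period L = r"
proof (rule antisym)
  show "period L \<le> r" using period_le_dim[of L] k L kL by (simp add: mem_interm)
  have "dim {x \<in> L. \<sigma> x = x} L \<le> period L"
    by (rule artin_dim[OF L endo period(1)[OF subset_refl]])
      (use period(2)[OF subset_refl] fixed_field_\<sigma> finite_dim in auto)
  then show "r \<le> period L" using fixed_field_\<sigma> by simp
qed

lemma r_pos: "0 < r"
  using period(1)[OF subset_refl] period_L by simp

lemma pow_r: "x \<in> L \<Longrightarrow> (\<sigma> ^^ r) x = x"
  using period(2)[OF subset_refl] period_L by simp

lemma period_dvd_r:
  assumes T: "T \<subseteq> L" shows "period T dvd r"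
proof -
  define e where "e = period T"
  have "\<forall>x\<in>T. (\<sigma> ^^ (r mod e)) x = x"
  proof
    fix x assume x: "x \<in> T"
    have "(\<sigma> ^^ (r mod e)) ((\<sigma> ^^ (e * (r div e))) x) = (\<sigma> ^^ r) x"
      by (simp add: funpow_add[symmetric, THEN fun_cong, simplified])
    then show "(\<sigma> ^^ (r mod e)) x = x"
      using pow_mult_fixes period(2)[OF T] x pow_r T unfolding e_def by auto
  qed
  then have "\<not> 0 < r mod e"
    using period_least[of "r mod e" T] period(1)[OF T] unfolding e_def
    by (meson mod_less_divisor not_le)
  then show ?thesis unfolding e_def by (simp add: dvd_eq_mod_eq_0)
qed

lemma fixed_field_interm: "fixed_field t \<in> interm R k L"
  using fixed_points_subfield[OF L pow_endo] pow_fixes_k kL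
  unfolding fixed_field_def by (auto simp: mem_interm)

lemma fixed_field_mono: "a dvd b \<Longrightarrow> fixed_field a \<subseteq> fixed_field b"
  unfolding fixed_field_def using pow_mult_fixes by (auto elim!: dvdE)

text \<open>The powers \<open>\<sigma>\<^sup>e\<^sup>j\<close> with \<open>j < r / e\<close> are \<open>r / e\<close> distinct embeddings of \<open>L\<close> over the field fixed
  by \<open>\<sigma>\<^sup>e\<close>, so this field has degree at least \<open>r / e\<close> below \<open>L\<close>.\<close>

lemma dim_fixed_field_le:
  assumes e: "0 < e" "e dvd r" shows "dim k (fixed_field e) \<le> e"
proof -
  define F where "F = fixed_field e"
  have F: "subfield F R" "k \<subseteq> F" "F \<subseteq> L" using fixed_field_interm unfolding F_def by (auto simp: mem_interm)
  have "card {..<r div e} \<le> dim F L"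
  proof (rule card_embeddings_le_dim[OF F(1) L F(3) finite_dimension_top[OF k F(1) L F(2,3) finite_dim]
        finite_lessThan, where f = "\<lambda>j. \<sigma> ^^ (e * j)"])
    show "\<exists>x\<in>L. (\<sigma> ^^ (e * i)) x \<noteq> (\<sigma> ^^ (e * j)) x"
      if "i \<in> {..<r div e}" "j \<in> {..<r div e}" "i \<noteq> j" for i j
    proof (rule pow_distinct_below_period[OF subset_refl, unfolded period_L])
      have "e * i < e * (r div e)" "e * j < e * (r div e)" using that e(1) by auto
      then show "e * i < r" "e * j < r" using e(2) by simp_all
      show "e * i \<noteq> e * j" using that e by simp
    qed
  qed (use endo_carrier[OF L pow_endo] endo_add[OF L pow_endo] endo_mult[OF L pow_endo]
      pow_mult_fixes F_def fixed_field_def in auto)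
  then have "e * (r div e) \<le> e * dim F L" by simp
  also have "e * (r div e) = dim k F * dim F L"
    using e dim_tower[OF k F(1) L F(2,3) finite_dim] by simp
  finally have "dim k F * dim F L \<le> e * dim F L" .
  moreover have "0 < dim F L"
    using e r_pos dim_tower[OF k F(1) L F(2,3) finite_dim] by (metis gr0I mult_0_right)
  ultimately show ?thesis unfolding F_def by simp
qed

text \<open>\<open>\<sigma>\<^sup>t\<close> has order \<open>r / t\<close> on \<open>L\<close>, so Artin's bound gives \<open>[L : fixed_field t] \<le> r / t\<close>.\<close>

lemma dim_fixed_field_ge:
  assumes t: "t dvd r" shows "t \<le> dim k (fixed_field t)"
proof -
  define F where "F = fixed_field t"
  have F: "subfield F R" "k \<subseteq> F" "F \<subseteq> L" using fixed_field_interm unfolding F_def by (auto simp: mem_interm)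
  have q: "0 < r div t" using t r_pos by (metis dvd_div_eq_0_iff gr0I)
  have "((\<sigma> ^^ t) ^^ (r div t)) x = x" if "x \<in> L" for x
    using pow_r[OF that] t by (simp add: funpow_mult)
  then have "dim F L \<le> r div t"
    using artin_dim[OF L pow_endo q] finite_dimension_top[OF k F(1) L F(2,3) finite_dim]
    unfolding F_def fixed_field_def by blast
  then have "dim k F * dim F L \<le> dim k F * (r div t)" by simp
  then have "t * (r div t) \<le> dim k F * (r div t)"
    using t dim_tower[OF k F(1) L F(2,3) finite_dim] by simp
  then show ?thesis using q unfolding F_def by simp
qed

lemma dim_fixed_field: "t dvd r \<Longrightarrow> dim k (fixed_field t) = t"
  using dim_fixed_field_le dim_fixed_field_ge r_pos by (metis antisym dvd_pos_nat)

lemma interm_eq_fixed_field_period: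
  assumes T: "T \<in> interm R k L"
  shows "T = fixed_field (period T)" and "dim k T = period T"
proof -
  define F where "F = fixed_field (period T)"
  have T': "subfield T R" "k \<subseteq> T" "T \<subseteq> L" using T by (auto simp: mem_interm)
  have F: "subfield F R" "k \<subseteq> F" "F \<subseteq> L" using fixed_field_interm unfolding F_def by (auto simp: mem_interm)
  have TF: "T \<subseteq> F" using period(2)[OF T'(3)] T'(3) unfolding F_def fixed_field_def by auto
  have fd: "finite_dimension k F" "finite_dimension k T"
    using finite_dimension_bottom[OF k F(1,2,3) finite_dim] finite_dimension_bottom[OF k T' finite_dim] .
  have "dim k F = period T" unfolding F_def by (rule dim_fixed_field[OF period_dvd_r[OF T'(3)]])
  moreover have "period T \<le> dim k T" by (rule period_le_dim[OF T])
  moreover have "dim k T \<le> dim k F" by (rule dim_mono[OF k fd TF])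
  ultimately have "dim k T = dim k F" "dim k T = period T" by auto
  then show "T = fixed_field (period T)" "dim k T = period T"
    using dim_eq_imp_eq[OF k fd TF] unfolding F_def by auto
qed

lemma dim_dvd_r: "T \<in> interm R k L \<Longrightarrow> dim k T dvd r"
  using interm_eq_fixed_field_period(2) period_dvd_r by (simp add: mem_interm)

lemma interm_eq_fixed_field: "T \<in> interm R k L \<Longrightarrow> T = fixed_field (dim k T)"
  using interm_eq_fixed_field_period by simp

lemma interm_subset_iff_dvd:
  assumes T: "T \<in> interm R k L" and U: "U \<in> interm R k L"
  shows "T \<subseteq> U \<longleftrightarrow> dim k T dvd dim k U"
proof
  assume TU: "T \<subseteq> U"
  have T': "subfield T R" "k \<subseteq> T" and U': "subfield U R" "U \<subseteq> L" using T U by (auto simp: mem_interm)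
  show "dim k T dvd dim k U"
    using dim_tower[OF k T'(1) U'(1) T'(2) TU finite_dimension_bottom[OF k U'(1) _ U'(2) finite_dim]]
      T'(2) TU by simp
next
  assume "dim k T dvd dim k U"
  from fixed_field_mono[OF this] show "T \<subseteq> U"
    by (simp only: interm_eq_fixed_field[OF T, symmetric] interm_eq_fixed_field[OF U, symmetric])
qed

lemma bij_betw_dim: "bij_betw (dim k) (interm R k L) {d. d dvd r}"
proof (rule bij_betw_imageI)
  show "inj_on (dim k) (interm R k L)"
    using interm_eq_fixed_field by (metis inj_onI)
  show "dim k ` interm R k L = {d. d dvd r}"
  proof
    show "dim k ` interm R k L \<subseteq> {d. d dvd r}" using dim_dvd_r by auto
    show "{d. d dvd r} \<subseteq> dim k ` interm R k L"
    proof
      fix d assume "d \<in> {d. d dvd r}"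
      then have "d = dim k (fixed_field d)" using dim_fixed_field by simp
      then show "d \<in> dim k ` interm R k L" using fixed_field_interm by blast
    qed
  qed
qed

end


lemma prime_power_prod_dvd_iff:
  fixes P :: "nat set"
  assumes P: "finite P" "\<And>p. p \<in> P \<Longrightarrow> Factorial_Ring.prime p"
  shows "(\<Prod>p\<in>P. p ^ \<gamma> p) dvd (\<Prod>p\<in>P. p ^ \<delta> p) \<longleftrightarrow> (\<forall>p\<in>P. \<gamma> p \<le> \<delta> p)"
proof -
  have nonzero: "(\<Prod>p\<in>P. p ^ \<epsilon> p) \<noteq> 0" for \<epsilon> :: "nat \<Rightarrow> nat"
    using P by (auto simp: prod_zero_iff dest: prime_gt_0_nat)
  show ?thesis
  proof
    assume dvd: "(\<Prod>p\<in>P. p ^ \<gamma> p) dvd (\<Prod>p\<in>P. p ^ \<delta> p)"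
    show "\<forall>p\<in>P. \<gamma> p \<le> \<delta> p"
    proof
      fix p assume p: "p \<in> P"
      have "multiplicity p (\<Prod>p\<in>P. p ^ \<gamma> p) \<le> multiplicity p (\<Prod>p\<in>P. p ^ \<delta> p)"
        by (rule dvd_imp_multiplicity_le[OF dvd nonzero])
      then show "\<gamma> p \<le> \<delta> p" using p by (simp add: multiplicity_prod_prime_powers[OF P P(2)[OF p]])
    qed
  next
    assume "\<forall>p\<in>P. \<gamma> p \<le> \<delta> p"
    then show "(\<Prod>p\<in>P. p ^ \<gamma> p) dvd (\<Prod>p\<in>P. p ^ \<delta> p)"
      by (intro multiplicity_le_imp_dvd[OF nonzero]) (simp add: multiplicity_prod_prime_powers[OF P])
  qed
qed

lemma multiplicity_prod_prime_factors:
  fixes n :: nat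
  assumes "p \<in> prime_factors n"
  shows "multiplicity p (\<Prod>q\<in>prime_factors n. q ^ \<gamma> q) = \<gamma> p"
  using multiplicity_prod_prime_powers[OF finite_set_mset in_prime_factors_imp_prime
      in_prime_factors_imp_prime[OF assms]] assms by simp

lemma divisor_eq_prime_power_prod:
  fixes r t :: nat
  assumes "0 < r" "t dvd r"
  shows "t = (\<Prod>p\<in>prime_factors r. p ^ multiplicity p t)"
proof -
  have t: "t \<noteq> 0" using assms by auto
  have "t = (\<Prod>p\<in>prime_factors t. p ^ multiplicity p t)" using prod_prime_factors[OF t] by simp
  also have "\<dots> = (\<Prod>p\<in>prime_factors r. p ^ multiplicity p t)"
  proof (rule prod.mono_neutral_left)
    show "prime_factors t \<subseteq> prime_factors r" using assms by (intro dvd_prime_factors) auto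
    show "\<forall>p\<in>prime_factors r - prime_factors t. p ^ multiplicity p t = 1"
      using t by (auto simp: in_prime_factors_iff not_dvd_imp_multiplicity_0)
  qed simp
  finally show ?thesis .
qed

lemma card_divisors:
  fixes r :: nat
  assumes r: "0 < r"
  shows "card {d. d dvd r} = (\<Prod>p\<in>prime_factors r. multiplicity p r + 1)"
proof -
  let ?P = "prime_factors r"
  define expos where "expos = (\<lambda>d. restrict (\<lambda>p. multiplicity p d) ?P)"
  have prod_dvd: "(\<Prod>p\<in>?P. p ^ \<gamma> p) dvd r" if "\<forall>p\<in>?P. \<gamma> p \<le> multiplicity p r" for \<gamma>
  proof -
    have "(\<Prod>p\<in>?P. p ^ \<gamma> p) dvd (\<Prod>p\<in>?P. p ^ multiplicity p r)"
      using that by (subst prime_power_prod_dvd_iff) (auto dest: in_prime_factors_imp_prime)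
    moreover have "(\<Prod>p\<in>?P. p ^ multiplicity p r) = r"
      by (rule divisor_eq_prime_power_prod[OF r dvd_refl, symmetric])
    ultimately show ?thesis by simp
  qed
  have "bij_betw expos {d. d dvd r} (PiE ?P (\<lambda>p. {0..multiplicity p r}))"
  proof (rule bij_betw_imageI)
    show "inj_on expos {d. d dvd r}"
    proof (rule inj_onI)
      fix d d' assume d: "d \<in> {d. d dvd r}" "d' \<in> {d. d dvd r}" and eq: "expos d = expos d'"
      have "d = (\<Prod>p\<in>?P. p ^ multiplicity p d)" using d(1) by (intro divisor_eq_prime_power_prod[OF r]) simp
      also have "\<dots> = (\<Prod>p\<in>?P. p ^ multiplicity p d')"
      proof (rule prod.cong)
        fix p assume "p \<in> ?P"
        then show "p ^ multiplicity p d = p ^ multiplicity p d'"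
          using fun_cong[OF eq, of p] by (simp add: expos_def)
      qed simp
      also have "\<dots> = d'" using d(2) by (intro divisor_eq_prime_power_prod[OF r, symmetric]) simp
      finally show "d = d'" .
    qed
    show "expos ` {d. d dvd r} = PiE ?P (\<lambda>p. {0..multiplicity p r})"
    proof
      show "expos ` {d. d dvd r} \<subseteq> PiE ?P (\<lambda>p. {0..multiplicity p r})"
        using r by (auto simp: expos_def dvd_imp_multiplicity_le)
      show "PiE ?P (\<lambda>p. {0..multiplicity p r}) \<subseteq> expos ` {d. d dvd r}"
      proof
        fix \<gamma> assume \<gamma>: "\<gamma> \<in> PiE ?P (\<lambda>p. {0..multiplicity p r})"
        have "\<gamma> = expos (\<Prod>p\<in>?P. p ^ \<gamma> p)"
          using \<gamma> by (auto simp: expos_def multiplicity_prod_prime_factors PiE_def extensional_def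
              restrict_def fun_eq_iff)
        moreover have "(\<Prod>p\<in>?P. p ^ \<gamma> p) \<in> {d. d dvd r}"
          using \<gamma> by (simp add: prod_dvd PiE_iff)
        ultimately show "\<gamma> \<in> expos ` {d. d dvd r}" by (rule image_eqI)
      qed
    qed
  qed
  then have "card {d. d dvd r} = card (PiE ?P (\<lambda>p. {0..multiplicity p r}))"
    by (rule bij_betw_same_card)
  also have "\<dots> = (\<Prod>p\<in>?P. multiplicity p r + 1)" by (simp add: card_PiE)
  finally show ?thesis .
qed

lemma (in field) subfield_inter:
  assumes T: "subfield T R" and U: "subfield U R" shows "subfield (T \<inter> U) R"
proof (rule subfieldI')
  show "subring (T \<inter> U) R" using subring_inter[OF subfieldE(1)[OF T] subfieldE(1)[OF U]] .
  show "\<And>x. x \<in> T \<inter> U - {\<zero>} \<Longrightarrow> inv x \<in> T \<inter> U"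
    using subfield_m_inv(1)[OF T] subfield_m_inv(1)[OF U] by blast
qed

context cyclic_galois
begin

abbreviation P :: "nat set" where "P \<equiv> prime_factors r"

definition expo :: "'a set \<Rightarrow> nat \<Rightarrow> nat" where
  "expo T p = (if p \<in> P then multiplicity p (dim k T) else 0)"

definition expo_field :: "(nat \<Rightarrow> nat) \<Rightarrow> 'a set" where
  "expo_field \<gamma> = fixed_field (\<Prod>p\<in>P. p ^ \<gamma> p)"

lemma P_prime: "p \<in> P \<Longrightarrow> Factorial_Ring.prime p"
  by (rule in_prime_factors_imp_prime)

lemma prod_dvd_prod_iff: "(\<Prod>p\<in>P. p ^ \<gamma> p) dvd (\<Prod>p\<in>P. p ^ \<delta> p) \<longleftrightarrow> (\<forall>p\<in>P. \<gamma> p \<le> \<delta> p)"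
  by (rule prime_power_prod_dvd_iff) (auto dest: P_prime)

lemma expo_L: "p \<in> P \<Longrightarrow> expo L p = multiplicity p r"
  by (simp add: expo_def)

lemma expo_outside: "p \<notin> P \<Longrightarrow> expo T p = 0"
  by (simp add: expo_def)

lemma L_interm: "L \<in> interm R k L" and k_interm: "k \<in> interm R k L"
  using k L kL by (auto simp: mem_interm)

lemma dim_eq_prod_expo:
  assumes "T \<in> interm R k L" shows "dim k T = (\<Prod>p\<in>P. p ^ expo T p)"
proof -
  have "dim k T = (\<Prod>p\<in>P. p ^ multiplicity p (dim k T))"
    by (rule divisor_eq_prime_power_prod[OF r_pos dim_dvd_r[OF assms]])
  also have "\<dots> = (\<Prod>p\<in>P. p ^ expo T p)" by (intro prod.cong) (simp_all add: expo_def)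
  finally show ?thesis .
qed

lemma expo_le_L: "T \<in> interm R k L \<Longrightarrow> expo T \<le> expo L"
  using dim_dvd_r r_pos by (auto simp: le_fun_def expo_def dvd_imp_multiplicity_le)

lemma expo_field_interm: "expo_field \<gamma> \<in> interm R k L"
  unfolding expo_field_def by (rule fixed_field_interm)

lemma prod_dvd_r:
  assumes "\<gamma> \<le> expo L" shows "(\<Prod>p\<in>P. p ^ \<gamma> p) dvd r"
proof -
  have "(\<Prod>p\<in>P. p ^ \<gamma> p) dvd (\<Prod>p\<in>P. p ^ expo L p)"
    using assms by (simp add: prod_dvd_prod_iff le_fun_def)
  then show ?thesis by (simp only: dim_eq_prod_expo[OF L_interm, symmetric])
qed

lemma expo_expo_field: "\<gamma> \<le> expo L \<Longrightarrow> expo (expo_field \<gamma>) = \<gamma>"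
proof
  fix p assume \<gamma>: "\<gamma> \<le> expo L"
  have "\<gamma> q = 0" if "q \<notin> P" for q using le_funD[OF \<gamma>, of q] expo_outside[OF that] by simp
  then show "expo (expo_field \<gamma>) p = \<gamma> p"
    unfolding expo_def expo_field_def dim_fixed_field[OF prod_dvd_r[OF \<gamma>]]
    by (simp add: multiplicity_prod_prime_factors)
qed

lemma expo_field_expo:
  assumes "T \<in> interm R k L" shows "expo_field (expo T) = T"
  unfolding expo_field_def dim_eq_prod_expo[OF assms, symmetric]
  by (rule interm_eq_fixed_field[OF assms, symmetric])

lemma expo_inj:
  assumes "T \<in> interm R k L" "U \<in> interm R k L" "expo T = expo U" shows "T = U"
proof -
  have "T = expo_field (expo T)" using expo_field_expo[OF assms(1)] by simp
  also have "\<dots> = U" using expo_field_expo[OF assms(2)] assms(3) by simp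
  finally show ?thesis .
qed

lemma subset_iff_expo_le:
  assumes "T \<in> interm R k L" "U \<in> interm R k L"
  shows "T \<subseteq> U \<longleftrightarrow> expo T \<le> expo U"
proof -
  have "T \<subseteq> U \<longleftrightarrow> (\<forall>p\<in>P. expo T p \<le> expo U p)"
    using interm_subset_iff_dvd[OF assms] prod_dvd_prod_iff
    by (simp only: dim_eq_prod_expo[OF assms(1)] dim_eq_prod_expo[OF assms(2)])
  also have "\<dots> \<longleftrightarrow> expo T \<le> expo U"
    by (auto simp: le_fun_def expo_outside)
  finally show ?thesis .
qed

lemma expo_field_mono_iff:
  "\<gamma> \<le> expo L \<Longrightarrow> \<delta> \<le> expo L \<Longrightarrow> expo_field \<gamma> \<subseteq> expo_field \<delta> \<longleftrightarrow> \<gamma> \<le> \<delta>"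
  using subset_iff_expo_le[OF expo_field_interm expo_field_interm] expo_expo_field by simp

lemma expo_k: "expo k = (\<lambda>_. 0)"
  using dimI[OF k dimension_one[OF k]] by (simp add: fun_eq_iff expo_def over_def)

lemma expo_eq_iff:
  assumes "\<gamma> \<le> expo L"
  shows "expo T = \<gamma> \<longleftrightarrow> (\<forall>p\<in>P. expo T p = \<gamma> p)"
proof -
  have "\<gamma> p = 0" if "p \<notin> P" for p using le_funD[OF assms, of p] expo_outside[OF that] by simp
  then show ?thesis by (auto simp: fun_eq_iff expo_outside)
qed

lemma dim_eq_prod_iff:
  assumes "T \<in> interm R k L"
  shows "dim k T = (\<Prod>p\<in>P. p ^ \<gamma> p) \<longleftrightarrow> (\<forall>p\<in>P. expo T p = \<gamma> p)"
proof
  assume "dim k T = (\<Prod>p\<in>P. p ^ \<gamma> p)"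
  then have "(\<Prod>p\<in>P. p ^ expo T p) dvd (\<Prod>p\<in>P. p ^ \<gamma> p)" "(\<Prod>p\<in>P. p ^ \<gamma> p) dvd (\<Prod>p\<in>P. p ^ expo T p)"
    using dim_eq_prod_expo[OF assms] by simp_all
  then show "\<forall>p\<in>P. expo T p = \<gamma> p"
    using prod_dvd_prod_iff[of "expo T" \<gamma>] prod_dvd_prod_iff[of \<gamma> "expo T"]
    by (auto intro: antisym)
qed (simp add: dim_eq_prod_expo[OF assms] cong: prod.cong)

lemma interm_inter: "T \<in> interm R k L \<Longrightarrow> U \<in> interm R k L \<Longrightarrow> T \<inter> U \<in> interm R k L"
  using subfield_inter by (auto simp: mem_interm)

lemma generate_field_interm: "k \<subseteq> H \<Longrightarrow> H \<subseteq> L \<Longrightarrow> generate_field R H \<in> interm R k L"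
proof -
  assume H: "k \<subseteq> H" "H \<subseteq> L"
  then have HR: "H \<subseteq> carrier R" using subfieldE(3)[OF L] by blast
  show ?thesis
    using generate_field_is_subfield[OF HR] generate_fieldE(2)[OF HR refl]
      generate_field_min_subfield1[OF HR L H(2)] H(1)
    by (auto simp: mem_interm)
qed

lemma generate_field_subset_iff:
  assumes H: "H \<subseteq> L" and W: "W \<in> interm R k L"
  shows "generate_field R H \<subseteq> W \<longleftrightarrow> H \<subseteq> W"
proof -
  have HR: "H \<subseteq> carrier R" using H subfieldE(3)[OF L] by blast
  show ?thesis
    using generate_field_min_subfield1[OF HR, of W] generate_fieldE(2)[OF HR refl] W
    by (auto simp: mem_interm)
qed

lemma compositum_interm: "T \<in> interm R k L \<Longrightarrow> U \<in> interm R k L \<Longrightarrow> compositum R T U \<in> interm R k L"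
  unfolding compositum_def by (rule generate_field_interm) (auto simp: mem_interm)

lemma expo_inter:
  assumes T: "T \<in> interm R k L" and U: "U \<in> interm R k L"
  shows "expo (T \<inter> U) = inf (expo T) (expo U)"
proof (rule antisym)
  have TU: "T \<inter> U \<in> interm R k L" using interm_inter[OF T U] .
  show "expo (T \<inter> U) \<le> inf (expo T) (expo U)"
    using subset_iff_expo_le[OF TU T] subset_iff_expo_le[OF TU U] by simp
  have le: "inf (expo T) (expo U) \<le> expo L" using expo_le_L[OF T] by (simp add: le_infI1)
  then have "expo_field (inf (expo T) (expo U)) \<subseteq> T \<inter> U"
    using subset_iff_expo_le[OF expo_field_interm T] subset_iff_expo_le[OF expo_field_interm U]
      expo_expo_field by simp
  then show "inf (expo T) (expo U) \<le> expo (T \<inter> U)"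
    using subset_iff_expo_le[OF expo_field_interm TU] expo_expo_field[OF le] by simp
qed

lemma expo_compositum:
  assumes T: "T \<in> interm R k L" and U: "U \<in> interm R k L"
  shows "expo (compositum R T U) = sup (expo T) (expo U)"
proof (rule antisym)
  have TU: "compositum R T U \<in> interm R k L" using compositum_interm[OF T U] .
  have HL: "T \<union> U \<subseteq> L" using T U by (auto simp: mem_interm)
  have "T \<subseteq> compositum R T U" "U \<subseteq> compositum R T U"
    using generate_field_subset_iff[OF HL TU] unfolding compositum_def by auto
  then show "sup (expo T) (expo U) \<le> expo (compositum R T U)"
    using subset_iff_expo_le[OF T TU] subset_iff_expo_le[OF U TU] by simp
  have le: "sup (expo T) (expo U) \<le> expo L" using expo_le_L[OF T] expo_le_L[OF U] by simp
  then have "T \<subseteq> expo_field (sup (expo T) (expo U))" "U \<subseteq> expo_field (sup (expo T) (expo U))"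
    using subset_iff_expo_le[OF T expo_field_interm] subset_iff_expo_le[OF U expo_field_interm]
      expo_expo_field by simp_all
  then have "compositum R T U \<subseteq> expo_field (sup (expo T) (expo U))"
    unfolding compositum_def using generate_field_subset_iff[OF HL expo_field_interm] by simp
  then show "expo (compositum R T U) \<le> sup (expo T) (expo U)"
    using subset_iff_expo_le[OF TU expo_field_interm] expo_expo_field[OF le] by simp
qed

end


lemma cover_iff_incr:
  fixes \<gamma> \<delta> :: "'p \<Rightarrow> nat"
  shows "\<gamma> < \<delta> \<and> (\<forall>\<epsilon>. \<gamma> \<le> \<epsilon> \<and> \<epsilon> \<le> \<delta> \<longrightarrow> \<epsilon> = \<gamma> \<or> \<epsilon> = \<delta>) \<longleftrightarrow> (\<exists>p. \<delta> = \<gamma>(p := Suc (\<gamma> p)))"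
proof
  assume cover: "\<gamma> < \<delta> \<and> (\<forall>\<epsilon>. \<gamma> \<le> \<epsilon> \<and> \<epsilon> \<le> \<delta> \<longrightarrow> \<epsilon> = \<gamma> \<or> \<epsilon> = \<delta>)"
  then have le: "\<gamma> \<le> \<delta>" and "\<gamma> \<noteq> \<delta>" by auto
  then obtain p where "\<gamma> p \<noteq> \<delta> p" by (auto simp: fun_eq_iff)
  with le have p: "\<gamma> p < \<delta> p" using le_funD[OF le, of p] by simp
  have "\<gamma> \<le> \<gamma>(p := Suc (\<gamma> p))" "\<gamma>(p := Suc (\<gamma> p)) \<le> \<delta>"
    using p le by (auto simp: le_fun_def)
  moreover have "\<gamma>(p := Suc (\<gamma> p)) \<noteq> \<gamma>"
  proof
    assume "\<gamma>(p := Suc (\<gamma> p)) = \<gamma>"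
    then have "(\<gamma>(p := Suc (\<gamma> p))) p = \<gamma> p" by simp
    then show False by simp
  qed
  ultimately show "\<exists>p. \<delta> = \<gamma>(p := Suc (\<gamma> p))" using cover by blast
next
  assume "\<exists>p. \<delta> = \<gamma>(p := Suc (\<gamma> p))"
  then obtain p where \<delta>: "\<delta> = \<gamma>(p := Suc (\<gamma> p))" by blast
  have "\<epsilon> = \<gamma> \<or> \<epsilon> = \<delta>" if "\<gamma> \<le> \<epsilon>" "\<epsilon> \<le> \<delta>" for \<epsilon>
  proof -
    have other: "\<epsilon> x = \<gamma> x" if "x \<noteq> p" for x
      using le_funD[OF \<open>\<gamma> \<le> \<epsilon>\<close>, of x] le_funD[OF \<open>\<epsilon> \<le> \<delta>\<close>, of x] \<delta> that by simp
    have "\<gamma> p \<le> \<epsilon> p" "\<epsilon> p \<le> Suc (\<gamma> p)"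
      using le_funD[OF \<open>\<gamma> \<le> \<epsilon>\<close>, of p] le_funD[OF \<open>\<epsilon> \<le> \<delta>\<close>, of p] \<delta> by simp_all
    then have "\<epsilon> p = \<gamma> p \<or> \<epsilon> p = Suc (\<gamma> p)" by linarith
    then show ?thesis
    proof
      assume "\<epsilon> p = \<gamma> p"
      have "\<epsilon> = \<gamma>"
      proof
        fix x show "\<epsilon> x = \<gamma> x" using other \<open>\<epsilon> p = \<gamma> p\<close> by (cases "x = p") auto
      qed
      then show ?thesis ..
    next
      assume "\<epsilon> p = Suc (\<gamma> p)"
      then have "\<epsilon> = \<delta>" using other \<delta> by (intro ext) simp
      then show ?thesis ..
    qed
  qed
  moreover have "\<gamma> < \<delta>"
  proof -
    have "\<gamma> \<le> \<delta>" using \<delta> by (simp add: le_fun_def)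
    moreover have "\<not> \<delta> \<le> \<gamma>" using \<delta> le_funD[of \<delta> \<gamma> p] by auto
    ultimately show ?thesis by (simp add: less_fun_def)
  qed
  ultimately show "\<gamma> < \<delta> \<and> (\<forall>\<epsilon>. \<gamma> \<le> \<epsilon> \<and> \<epsilon> \<le> \<delta> \<longrightarrow> \<epsilon> = \<gamma> \<or> \<epsilon> = \<delta>)" by blast
qed

context cyclic_galois
begin

lemma expo_L_pos: "p \<in> P \<Longrightarrow> 0 < expo L p"
  using r_pos by (auto simp: expo_L prime_factors_multiplicity)

lemma interm_interval:
  assumes "S \<in> interm R k L" "T \<in> interm R k L"
  shows "interm R S T = {W \<in> interm R k L. S \<subseteq> W \<and> W \<subseteq> T}"
proof
  show "interm R S T \<subseteq> {W \<in> interm R k L. S \<subseteq> W \<and> W \<subseteq> T}"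
  proof
    fix W assume "W \<in> interm R S T"
    then have W: "subfield W R" "S \<subseteq> W" "W \<subseteq> T" by (auto simp: mem_interm)
    have "k \<subseteq> W" "W \<subseteq> L" using assms W(2,3) by (auto simp: mem_interm)
    then show "W \<in> {W \<in> interm R k L. S \<subseteq> W \<and> W \<subseteq> T}" using W by (simp add: mem_interm)
  qed
qed (auto simp: mem_interm)

lemma minimal_ext_iff_cover:
  assumes S: "S \<in> interm R k L" and T: "T \<in> interm R k L"
  shows "minimal_ext R S T \<longleftrightarrow>
    expo S < expo T \<and> (\<forall>\<epsilon>. expo S \<le> \<epsilon> \<and> \<epsilon> \<le> expo T \<longrightarrow> \<epsilon> = expo S \<or> \<epsilon> = expo T)"
proof
  assume min: "minimal_ext R S T"
  then have ST: "S \<subset> T" and interval: "interm R S T = {S, T}" by (auto simp: minimal_ext_def)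
  have "expo S < expo T" using ST subset_iff_expo_le[OF S T] expo_inj[OF S T] by (auto simp: less_le)
  moreover have "\<epsilon> = expo S \<or> \<epsilon> = expo T" if "expo S \<le> \<epsilon>" "\<epsilon> \<le> expo T" for \<epsilon>
  proof -
    have \<epsilon>: "\<epsilon> \<le> expo L" using that(2) expo_le_L[OF T] by simp
    have "S \<subseteq> expo_field \<epsilon>" "expo_field \<epsilon> \<subseteq> T"
      using that subset_iff_expo_le[OF S expo_field_interm] subset_iff_expo_le[OF expo_field_interm T]
        expo_expo_field[OF \<epsilon>] by auto
    then have "expo_field \<epsilon> \<in> {S, T}" using interval expo_field_interm interm_interval[OF S T] by blast
    then show ?thesis using expo_expo_field[OF \<epsilon>] by auto
  qed
  ultimately show "expo S < expo T \<and> (\<forall>\<epsilon>. expo S \<le> \<epsilon> \<and> \<epsilon> \<le> expo T \<longrightarrow> \<epsilon> = expo S \<or> \<epsilon> = expo T)"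
    by blast
next
  assume cover: "expo S < expo T \<and> (\<forall>\<epsilon>. expo S \<le> \<epsilon> \<and> \<epsilon> \<le> expo T \<longrightarrow> \<epsilon> = expo S \<or> \<epsilon> = expo T)"
  then have "S \<subset> T" using subset_iff_expo_le[OF S T] by auto
  moreover have "W = S \<or> W = T" if "W \<in> interm R S T" for W
  proof -
    have W: "W \<in> interm R k L" "S \<subseteq> W" "W \<subseteq> T" using that interm_interval[OF S T] by auto
    then have "expo W = expo S \<or> expo W = expo T"
      using cover subset_iff_expo_le[OF S W(1)] subset_iff_expo_le[OF W(1) T] by blast
    then show ?thesis using expo_inj[OF W(1) S] expo_inj[OF W(1) T] by blast
  qed
  ultimately show "minimal_ext R S T"
    using S T by (auto simp: minimal_ext_def interm_interval)
qed

lemma incr_le_expo_L: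
  assumes S: "S \<in> interm R k L" and p: "expo S p < expo L p"
  shows "(expo S)(p := Suc (expo S p)) \<le> expo L"
  using expo_le_L[OF S] p by (auto simp: le_fun_def)

lemma expo_field_incr:
  assumes S: "S \<in> interm R k L" and p: "expo S p < expo L p"
  shows "expo (expo_field ((expo S)(p := Suc (expo S p)))) = (expo S)(p := Suc (expo S p))"
  by (rule expo_expo_field[OF incr_le_expo_L[OF S p]])

lemma eq_expo_field_iff:
  assumes T: "T \<in> interm R k L" and \<gamma>: "\<gamma> \<le> expo L"
  shows "T = expo_field \<gamma> \<longleftrightarrow> expo T = \<gamma>"
proof
  assume "T = expo_field \<gamma>"
  then show "expo T = \<gamma>" using expo_expo_field[OF \<gamma>] by simp
next
  assume "expo T = \<gamma>"
  then show "T = expo_field \<gamma>" using expo_field_expo[OF T] by simp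
qed

lemma single_le_expo_L: "p \<in> P \<Longrightarrow> b \<le> expo L p \<Longrightarrow> (\<lambda>_. 0)(p := b) \<le> expo L"
  by (simp add: le_fun_def)

lemma atoms_iff:
  assumes S: "S \<in> interm R k L"
  shows "T \<in> atoms R S L \<longleftrightarrow>
    (\<exists>p\<in>P. expo S p < expo L p \<and> T = expo_field ((expo S)(p := Suc (expo S p))))"
proof
  assume "T \<in> atoms R S L"
  then have min: "minimal_ext R S T" and TL: "T \<subseteq> L" by (auto simp: atoms_def)
  then have "T \<in> interm R S T" by (auto simp: minimal_ext_def)
  then have T: "T \<in> interm R k L" using S TL by (auto simp: mem_interm)
  have "expo S < expo T \<and> (\<forall>\<epsilon>. expo S \<le> \<epsilon> \<and> \<epsilon> \<le> expo T \<longrightarrow> \<epsilon> = expo S \<or> \<epsilon> = expo T)"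
    using min unfolding minimal_ext_iff_cover[OF S T] .
  then obtain p where p: "expo T = (expo S)(p := Suc (expo S p))"
    unfolding cover_iff_incr by blast
  then have "expo S p < expo L p" using le_funD[OF expo_le_L[OF T], of p] by simp
  moreover from this have "p \<in> P" using expo_outside[of p L] by (cases "p \<in> P") auto
  moreover have "T = expo_field ((expo S)(p := Suc (expo S p)))" using expo_field_expo[OF T] p by simp
  ultimately show "\<exists>p\<in>P. expo S p < expo L p \<and> T = expo_field ((expo S)(p := Suc (expo S p)))" by blast
next
  assume "\<exists>p\<in>P. expo S p < expo L p \<and> T = expo_field ((expo S)(p := Suc (expo S p)))"
  then obtain p where p: "expo S p < expo L p" and T: "T = expo_field ((expo S)(p := Suc (expo S p)))"
    by blast
  have "minimal_ext R S T"
    unfolding T minimal_ext_iff_cover[OF S expo_field_interm] expo_field_incr[OF S p]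
    by (rule cover_iff_incr[THEN iffD2]) blast
  then show "T \<in> atoms R S L" using T expo_field_interm by (auto simp: atoms_def mem_interm)
qed

lemma atoms_eq_image:
  assumes S: "S \<in> interm R k L"
  shows "atoms R S L = (\<lambda>p. expo_field ((expo S)(p := Suc (expo S p)))) ` {p \<in> P. expo S p < expo L p}"
  unfolding set_eq_iff atoms_iff[OF S] by auto

lemma inj_on_atoms:
  assumes S: "S \<in> interm R k L"
  shows "inj_on (\<lambda>p. expo_field ((expo S)(p := Suc (expo S p)))) {p \<in> P. expo S p < expo L p}"
proof (rule inj_onI)
  fix p q assume "p \<in> {p \<in> P. expo S p < expo L p}" "q \<in> {p \<in> P. expo S p < expo L p}"
    and eq: "expo_field ((expo S)(p := Suc (expo S p))) = expo_field ((expo S)(q := Suc (expo S q)))"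
  then have "expo (expo_field ((expo S)(p := Suc (expo S p))))
      = expo (expo_field ((expo S)(q := Suc (expo S q))))" by simp
  then have eq': "(expo S)(p := Suc (expo S p)) = (expo S)(q := Suc (expo S q))"
    using expo_field_incr[OF S] \<open>p \<in> _\<close> \<open>q \<in> _\<close> by simp
  show "p = q"
  proof (rule ccontr)
    assume "p \<noteq> q"
    then have "((expo S)(p := Suc (expo S p))) p \<noteq> ((expo S)(q := Suc (expo S q))) p" by simp
    then show False using eq' by simp
  qed
qed

lemma atoms_interm:
  assumes "S \<in> interm R k L" "T \<in> atoms R S L" shows "T \<in> interm R k L"
proof -
  obtain p where "T = expo_field ((expo S)(p := Suc (expo S p)))" using atoms_iff[OF assms(1)] assms(2) by blast
  then show ?thesis using expo_field_interm by simp
qed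

lemma atoms_subset_iff:
  "S' \<subseteq> L \<Longrightarrow> T \<in> atoms R S S' \<longleftrightarrow> T \<in> atoms R S L \<and> T \<subseteq> S'"
  by (auto simp: atoms_def)

subsection \<open>The atoms and the socle of \<open>[k, L]\<close>\<close>

lemma prod_single_prime:
  assumes "p \<in> P" shows "(\<Prod>q\<in>P. q ^ ((\<lambda>_. 0)(p := b)) q) = p ^ b"
proof -
  have "(\<Prod>q\<in>P. q ^ ((\<lambda>_. 0)(p := b)) q) = (\<Prod>q\<in>P. if q = p then q ^ b else 1)"
    by (intro prod.cong) auto
  also have "\<dots> = p ^ b" using assms by (simp add: prod.delta)
  finally show ?thesis .
qed

lemma dim_eq_prime_power_iff:
  assumes T: "T \<in> interm R k L" and p: "p \<in> P"
  shows "dim k T = p ^ b \<longleftrightarrow> expo T = (\<lambda>_. 0)(p := b)"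
proof -
  have "dim k T = p ^ b \<longleftrightarrow> (\<forall>q\<in>P. expo T q = ((\<lambda>_. 0)(p := b)) q)"
    using dim_eq_prod_iff[OF T, of "(\<lambda>_. 0)(p := b)"] prod_single_prime[OF p] by simp
  also have "\<dots> \<longleftrightarrow> expo T = (\<lambda>_. 0)(p := b)"
    using p expo_outside by (auto simp: fun_eq_iff)
  finally show ?thesis .
qed

lemma atom_k_iff:
  assumes T: "T \<in> interm R k L"
  shows "T \<in> atoms R k L \<longleftrightarrow> (\<exists>p\<in>P. dim k T = p)"
proof -
  have "T \<in> atoms R k L \<longleftrightarrow> (\<exists>p\<in>P. T = expo_field ((\<lambda>_. 0)(p := 1)))"
    using atoms_iff[OF k_interm] expo_L_pos by (simp add: expo_k)
  also have "\<dots> \<longleftrightarrow> (\<exists>p\<in>P. expo T = (\<lambda>_. 0)(p := 1))"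
    using eq_expo_field_iff[OF T single_le_expo_L] expo_L_pos by (simp add: Suc_le_eq)
  also have "\<dots> \<longleftrightarrow> (\<exists>p\<in>P. dim k T = p)"
    using dim_eq_prime_power_iff[OF T, of _ 1] by simp
  finally show ?thesis .
qed

lemma expo_single: "p \<in> P \<Longrightarrow> b \<le> expo L p \<Longrightarrow> expo (expo_field ((\<lambda>_. 0)(p := b))) = (\<lambda>_. 0)(p := b)"
  using expo_expo_field[OF single_le_expo_L] .

lemma dim_single: "p \<in> P \<Longrightarrow> b \<le> expo L p \<Longrightarrow> dim k (expo_field ((\<lambda>_. 0)(p := b))) = p ^ b"
  using dim_eq_prime_power_iff[OF expo_field_interm] expo_single by blast

lemma atom_k_unique: "p \<in> P \<Longrightarrow> \<exists>!A. A \<in> atoms R k L \<and> dim k A = p"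
proof (rule ex1I)
  assume p: "p \<in> P"
  then have one: "1 \<le> expo L p" using expo_L_pos by (simp add: Suc_le_eq)
  show "expo_field ((\<lambda>_. 0)(p := 1)) \<in> atoms R k L \<and> dim k (expo_field ((\<lambda>_. 0)(p := 1))) = p"
    using atom_k_iff[OF expo_field_interm] dim_single[OF p one] p by auto
  fix A assume A: "A \<in> atoms R k L \<and> dim k A = p"
  then have A_interm: "A \<in> interm R k L" using atoms_interm[OF k_interm] by blast
  then have "expo A = (\<lambda>_. 0)(p := 1)" using A dim_eq_prime_power_iff[OF A_interm p, of 1] by simp
  then show "A = expo_field ((\<lambda>_. 0)(p := 1))"
    using eq_expo_field_iff[OF A_interm single_le_expo_L[OF p one]] by simp
qed

lemma the_atom_k:
  assumes p: "p \<in> P"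
  shows "(THE A. A \<in> atoms R k L \<and> dim k A = p) = expo_field ((\<lambda>_. 0)(p := 1))"
proof (rule the1_equality[OF atom_k_unique[OF p]])
  have "1 \<le> expo L p" using expo_L_pos[OF p] by (simp add: Suc_le_eq)
  then show "expo_field ((\<lambda>_. 0)(p := 1)) \<in> atoms R k L \<and> dim k (expo_field ((\<lambda>_. 0)(p := 1))) = p"
    using atom_k_iff[OF expo_field_interm] dim_single[OF p] p by auto
qed

lemma P_nonempty: "k \<noteq> L \<Longrightarrow> P \<noteq> {}"
  using expo_inj[OF k_interm L_interm] expo_k expo_outside by (auto simp: fun_eq_iff)

lemma socle_k:
  assumes "k \<noteq> L"
  shows "socle R k L = generate_field R (\<Union>p\<in>P. THE A. A \<in> atoms R k L \<and> dim k A = p)"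
proof -
  have "{p \<in> P. 0 < expo L p} = P" using expo_L_pos by blast
  then have atoms: "atoms R k L = (\<lambda>p. expo_field ((\<lambda>_. 0)(p := 1))) ` P"
    using atoms_eq_image[OF k_interm] by (simp add: expo_k)
  obtain p where p: "p \<in> P" using P_nonempty[OF assms] by blast
  have "k \<subseteq> expo_field ((\<lambda>_. 0)(p := 1))" using expo_field_interm by (simp add: mem_interm)
  then have "k \<subseteq> \<Union> (atoms R k L)" using atoms p by blast
  then have "k \<union> \<Union> (atoms R k L) = \<Union> (atoms R k L)" by (rule Un_absorb1)
  also have "\<dots> = (\<Union>p\<in>P. expo_field ((\<lambda>_. 0)(p := 1)))"
    unfolding atoms by simp
  also have "\<dots> = (\<Union>p\<in>P. THE A. A \<in> atoms R k L \<and> dim k A = p)"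
    by (rule SUP_cong[OF refl]) (simp add: the_atom_k)
  finally show ?thesis unfolding socle_def by simp
qed

subsection \<open>The Loewy series\<close>

lemma expo_socle:
  assumes S: "S \<in> interm R k L"
  shows "socle R S L \<in> interm R k L" and "expo (socle R S L) = (\<lambda>p. min (Suc (expo S p)) (expo L p))"
proof -
  define g where "g = (\<lambda>p. min (Suc (expo S p)) (expo L p))"
  define H where "H = S \<union> \<Union> (atoms R S L)"
  have g: "g \<le> expo L" by (simp add: g_def le_fun_def)
  have S_le: "expo S \<le> expo L" by (rule expo_le_L[OF S])
  have "T \<subseteq> L" if "T \<in> atoms R S L" for T using atoms_interm[OF S that] by (simp add: mem_interm)
  then have HL: "H \<subseteq> L" using S by (auto simp: H_def mem_interm)
  have kH: "k \<subseteq> H" using S by (auto simp: H_def mem_interm)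
  have G: "generate_field R H \<in> interm R k L" by (rule generate_field_interm[OF kH HL])
  have H_G: "H \<subseteq> generate_field R H" using generate_field_subset_iff[OF HL G] by simp
  have "S \<subseteq> expo_field g"
    using subset_iff_expo_le[OF S expo_field_interm] expo_expo_field[OF g] S_le
    by (auto simp: g_def le_fun_def)
  moreover have "T \<subseteq> expo_field g" if "T \<in> atoms R S L" for T
  proof -
    from that obtain p where p: "expo S p < expo L p" "T = expo_field ((expo S)(p := Suc (expo S p)))"
      unfolding atoms_iff[OF S] by blast
    have "(expo S)(p := Suc (expo S p)) \<le> g" using p(1) S_le by (auto simp: g_def le_fun_def)
    then show ?thesis using p(2) expo_field_mono_iff[OF incr_le_expo_L[OF S p(1)] g] by simp
  qed
  ultimately have "H \<subseteq> expo_field g" unfolding H_def by blast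
  then have G_le: "generate_field R H \<subseteq> expo_field g"
    using generate_field_subset_iff[OF HL expo_field_interm] by simp
  have "g p \<le> expo (generate_field R H) p" for p
  proof (cases "expo S p < expo L p")
    case True
    then have "p \<in> P" using expo_outside[of p L] by (cases "p \<in> P") auto
    then have "expo_field ((expo S)(p := Suc (expo S p))) \<in> atoms R S L"
      unfolding atoms_eq_image[OF S] using True by (intro imageI) simp
    then have "expo_field ((expo S)(p := Suc (expo S p))) \<subseteq> generate_field R H"
      using H_G unfolding H_def by blast
    then have le_G: "(expo S)(p := Suc (expo S p)) \<le> expo (generate_field R H)"
      using subset_iff_expo_le[OF expo_field_interm G] expo_field_incr[OF S True] by simp
    have "Suc (expo S p) \<le> expo (generate_field R H) p" using le_funD[OF le_G, of p] by simp
    then show ?thesis by (simp add: g_def)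
  next
    case False
    then have "g p \<le> expo S p" by (simp add: g_def)
    also have "\<dots> \<le> expo (generate_field R H) p"
      using subset_iff_expo_le[OF S G] H_G by (simp add: H_def le_fun_def)
    finally show ?thesis .
  qed
  then have "expo_field g \<subseteq> generate_field R H"
    using subset_iff_expo_le[OF expo_field_interm G] expo_expo_field[OF g] by (simp add: le_fun_def)
  then have "socle R S L = expo_field g" unfolding socle_def H_def[symmetric] using G_le by blast
  then show "socle R S L \<in> interm R k L" and "expo (socle R S L) = g"
    using expo_field_interm expo_expo_field[OF g] by simp_all
qed

lemma loewy_Suc: "loewy R k L (Suc j) = (if loewy R k L j = L then L else socle R (loewy R k L j) L)"
  by (simp add: loewy_def)

lemma loewy_interm_expo:
  "loewy R k L j \<in> interm R k L \<and> expo (loewy R k L j) = (\<lambda>p. min j (expo L p))"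
proof (induction j)
  case 0
  then show ?case using k_interm expo_k by (simp add: loewy_def)
next
  case (Suc j)
  show ?case
  proof (cases "loewy R k L j = L")
    case True
    have eq: "expo L = (\<lambda>p. min j (expo L p))" using conjunct2[OF Suc.IH] unfolding True .
    have "expo L p \<le> j" for p using fun_cong[OF eq, of p] min.cobounded1[of j "expo L p"] by linarith
    then have "(\<lambda>p. min (Suc j) (expo L p)) = expo L" by (simp add: fun_eq_iff min_absorb2 le_SucI)
    then show ?thesis using True L_interm by (simp add: loewy_Suc)
  next
    case False
    then show ?thesis
      using Suc.IH expo_socle[of "loewy R k L j"] by (simp add: loewy_Suc min_def fun_eq_iff)
  qed
qed

lemma loewy_interm: "loewy R k L j \<in> interm R k L"
  using loewy_interm_expo by blast

lemma expo_loewy: "expo (loewy R k L j) = (\<lambda>p. min j (expo L p))"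
  using loewy_interm_expo by blast

lemma loewy_eq_L_iff: "loewy R k L j = L \<longleftrightarrow> (\<forall>p\<in>P. expo L p \<le> j)"
proof -
  have "loewy R k L j = L \<longleftrightarrow> expo (loewy R k L j) = expo L"
    using expo_inj[OF loewy_interm L_interm] by auto
  also have "\<dots> \<longleftrightarrow> (\<lambda>p. min j (expo L p)) = expo L" by (simp only: expo_loewy)
  also have "\<dots> \<longleftrightarrow> (\<forall>p\<in>P. expo L p \<le> j)"
  proof
    assume eq: "(\<lambda>p. min j (expo L p)) = expo L"
    show "\<forall>p\<in>P. expo L p \<le> j"
    proof
      fix p
      have "min j (expo L p) = expo L p" using fun_cong[OF eq, of p] by simp
      then show "expo L p \<le> j" using min.cobounded1[of j "expo L p"] by linarith
    qed
  next
    assume le: "\<forall>p\<in>P. expo L p \<le> j"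
    show "(\<lambda>p. min j (expo L p)) = expo L"
    proof
      fix p show "min j (expo L p) = expo L p"
        using le expo_outside[of p L] by (cases "p \<in> P") (simp_all add: min_absorb2)
    qed
  qed
  finally show ?thesis .
qed

lemma Max_expo_L: "Max (expo L ` P) = Max ((\<lambda>p. multiplicity p r) ` P)"
  using expo_L by (simp cong: image_cong)

lemma loewy_length_eq_Max:
  assumes "k \<noteq> L" shows "loewy_length R k L = Max ((\<lambda>p. multiplicity p r) ` P)"
  unfolding loewy_length_def loewy_eq_L_iff Max_expo_L[symmetric]
  using P_nonempty[OF assms] by (intro Least_equality) auto

lemma dim_loewy: "dim k (loewy R k L j) = (\<Prod>p\<in>P. p ^ min j (multiplicity p r))"
  using dim_eq_prod_expo[OF loewy_interm] expo_loewy expo_L by (simp cong: prod.cong)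

lemma socle_generators_subset:
  assumes S: "S \<in> interm R k L" shows "S \<union> \<Union> (atoms R S L) \<subseteq> socle R S L"
proof -
  have "T \<subseteq> L" if "T \<in> atoms R S L" for T using atoms_interm[OF S that] by (simp add: mem_interm)
  then have HL: "S \<union> \<Union> (atoms R S L) \<subseteq> L" using S by (auto simp: mem_interm)
  have "socle R S L \<subseteq> socle R S L" ..
  then show ?thesis
    using generate_field_subset_iff[OF HL expo_socle(1)[OF S]] unfolding socle_def by blast
qed

lemma atoms_loewy_step: "atoms R (loewy R k L j) (loewy R k L (Suc j)) = atoms R (loewy R k L j) L"
proof (cases "loewy R k L j = L")
  case True
  then show ?thesis by (simp add: loewy_Suc)
next
  case False
  let ?S = "loewy R k L j"
  have sub: "socle R ?S L \<subseteq> L" using expo_socle(1)[OF loewy_interm] by (simp add: mem_interm)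
  have "T \<in> atoms R ?S (socle R ?S L) \<longleftrightarrow> T \<in> atoms R ?S L" for T
  proof
    assume "T \<in> atoms R ?S (socle R ?S L)"
    then show "T \<in> atoms R ?S L" using atoms_subset_iff[OF sub] by blast
  next
    assume T: "T \<in> atoms R ?S L"
    then have "T \<subseteq> socle R ?S L" using socle_generators_subset[OF loewy_interm] by blast
    then show "T \<in> atoms R ?S (socle R ?S L)" using atoms_subset_iff[OF sub] T by blast
  qed
  then have "atoms R ?S (socle R ?S L) = atoms R ?S L" by (rule Set.set_eqI)
  then show ?thesis using False by (simp add: loewy_Suc)
qed

lemma atom_loewy_iff:
  assumes T: "T \<in> interm R k L"
  shows "T \<in> atoms R (loewy R k L j) (loewy R k L (Suc j)) \<longleftrightarrow>
    (\<exists>\<gamma>. dim k T = (\<Prod>p\<in>P. p ^ \<gamma> p) \<and>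
      (\<exists>p0\<in>P. min j (multiplicity p0 r) < multiplicity p0 r \<and> \<gamma> p0 = min j (multiplicity p0 r) + 1 \<and>
        (\<forall>p\<in>P - {p0}. \<gamma> p = min j (multiplicity p r))))"
    (is "_ \<longleftrightarrow> (\<exists>\<gamma>. ?dim \<gamma> \<and> (\<exists>p0\<in>P. ?step \<gamma> p0))")
proof -
  let ?S = "loewy R k L j"
  let ?incr = "\<lambda>p0. (expo ?S)(p0 := Suc (expo ?S p0))"
  have S: "?S \<in> interm R k L" by (rule loewy_interm)
  have expo_S: "expo ?S p = min j (multiplicity p r)" if "p \<in> P" for p
    using expo_loewy expo_L[OF that] by simp
  have "T \<in> atoms R ?S (loewy R k L (Suc j)) \<longleftrightarrow>
      (\<exists>p0\<in>P. expo ?S p0 < expo L p0 \<and> T = expo_field (?incr p0))"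
    unfolding atoms_loewy_step by (rule atoms_iff[OF S])
  also have "\<dots> \<longleftrightarrow> (\<exists>p0\<in>P. expo ?S p0 < expo L p0 \<and> expo T = ?incr p0)"
  proof (rule bex_cong[OF refl])
    fix p0 assume "p0 \<in> P"
    show "expo ?S p0 < expo L p0 \<and> T = expo_field (?incr p0) \<longleftrightarrow> expo ?S p0 < expo L p0 \<and> expo T = ?incr p0"
      using eq_expo_field_iff[OF T incr_le_expo_L[OF S]] by blast
  qed
  also have "\<dots> \<longleftrightarrow> (\<exists>\<gamma>. ?dim \<gamma> \<and> (\<exists>p0\<in>P. ?step \<gamma> p0))"
  proof
    assume "\<exists>p0\<in>P. expo ?S p0 < expo L p0 \<and> expo T = ?incr p0"
    then obtain p0 where p0: "p0 \<in> P" "expo ?S p0 < expo L p0" "expo T = ?incr p0" by blast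
    have "expo T p0 = min j (multiplicity p0 r) + 1" using p0(3) expo_S[OF p0(1)] by simp
    moreover have "\<forall>p\<in>P - {p0}. expo T p = min j (multiplicity p r)" using p0(3) expo_S by simp
    moreover have "min j (multiplicity p0 r) < multiplicity p0 r"
      using p0(2) expo_S[OF p0(1)] expo_L[OF p0(1)] by simp
    ultimately have "?step (expo T) p0" by blast
    then show "\<exists>\<gamma>. ?dim \<gamma> \<and> (\<exists>p0\<in>P. ?step \<gamma> p0)" using dim_eq_prod_expo[OF T] p0(1) by blast
  next
    assume "\<exists>\<gamma>. ?dim \<gamma> \<and> (\<exists>p0\<in>P. ?step \<gamma> p0)"
    then obtain \<gamma> p0 where \<gamma>: "?dim \<gamma>" and p0: "p0 \<in> P" "?step \<gamma> p0" by blast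
    have lt: "expo ?S p0 < expo L p0" using p0 expo_S expo_L by simp
    have T_\<gamma>: "\<forall>p\<in>P. expo T p = \<gamma> p" using \<gamma> dim_eq_prod_iff[OF T] by blast
    have "expo T p = ?incr p0 p" if "p \<in> P" for p
    proof (cases "p = p0")
      case True
      then show ?thesis using T_\<gamma> that p0(2) expo_S[OF that] by simp
    next
      case False
      then show ?thesis using T_\<gamma> that p0(2) expo_S[OF that] by simp
    qed
    then have "\<forall>p\<in>P. expo T p = ?incr p0 p" by blast
    then have "expo T = ?incr p0" using expo_eq_iff[OF incr_le_expo_L[OF S lt]] by blast
    then show "\<exists>p0\<in>P. expo ?S p0 < expo L p0 \<and> expo T = ?incr p0" using p0(1) lt by blast
  qed
  finally show ?thesis .
qed

lemma card_atoms_loewy: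
  "card (atoms R (loewy R k L j) (loewy R k L (Suc j))) = card {p \<in> P. j < multiplicity p r}"
proof -
  let ?S = "loewy R k L j"
  have "card (atoms R ?S (loewy R k L (Suc j))) = card {p \<in> P. expo ?S p < expo L p}"
    unfolding atoms_loewy_step atoms_eq_image[OF loewy_interm]
    by (rule card_image[OF inj_on_atoms[OF loewy_interm]])
  also have "{p \<in> P. expo ?S p < expo L p} = {p \<in> P. j < multiplicity p r}"
    using expo_loewy expo_L by auto
  finally show ?thesis .
qed

lemma sum_card_atoms_loewy:
  "(\<Sum>j<Max ((\<lambda>p. multiplicity p r) ` P). card (atoms R (loewy R k L j) (loewy R k L (Suc j))))
    = (\<Sum>p\<in>P. multiplicity p r)"
proof -
  define M where "M = Max ((\<lambda>p. multiplicity p r) ` P)"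
  have "(\<Sum>j<M. card (atoms R (loewy R k L j) (loewy R k L (Suc j)))) = (\<Sum>j<M. card {p \<in> P. j < multiplicity p r})"
    by (simp add: card_atoms_loewy)
  also have "\<dots> = (\<Sum>j<M. \<Sum>p\<in>P. if j < multiplicity p r then 1 else 0)"
    by (simp add: sum.If_cases Int_def)
  also have "\<dots> = (\<Sum>p\<in>P. \<Sum>j<M. if j < multiplicity p r then 1 else 0)"
    by (rule sum.swap)
  also have "\<dots> = (\<Sum>p\<in>P. card {j. j < M \<and> j < multiplicity p r})"
    by (simp add: sum.If_cases Int_def)
  also have "\<dots> = (\<Sum>p\<in>P. multiplicity p r)"
  proof (rule sum.cong[OF refl])
    fix p assume "p \<in> P"
    then have "multiplicity p r \<le> M" unfolding M_def by simp
    then have "{j. j < M \<and> j < multiplicity p r} = {..<multiplicity p r}" by auto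
    then show "card {j. j < M \<and> j < multiplicity p r} = multiplicity p r" by simp
  qed
  finally show ?thesis unfolding M_def .
qed

subsection \<open>Boolean intervals\<close>

lemma interm_distrib:
  assumes T: "T \<in> interm R k L" and U: "U \<in> interm R k L" and V: "V \<in> interm R k L"
  shows "T \<inter> compositum R U V = compositum R (T \<inter> U) (T \<inter> V)"
proof (rule expo_inj)
  show "T \<inter> compositum R U V \<in> interm R k L" by (intro interm_inter compositum_interm T U V)
  show "compositum R (T \<inter> U) (T \<inter> V) \<in> interm R k L" by (intro interm_inter compositum_interm T U V)
  show "expo (T \<inter> compositum R U V) = expo (compositum R (T \<inter> U) (T \<inter> V))"
    by (simp add: expo_inter expo_compositum interm_inter compositum_interm T U V inf_sup_distrib1)
qed

text \<open>If no exponent rises by more than one between \<open>S\<close> and \<open>S'\<close>, the complement of an intermediate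
  field with exponents \<open>\<epsilon>\<close> is the one with exponents \<open>expo S + expo S' - \<epsilon>\<close>.\<close>

lemma boolean_if_expo_step_le_one:
  assumes S: "S \<in> interm R k L" and S': "S' \<in> interm R k L" and le: "expo S \<le> expo S'"
    and step: "\<And>p. expo S' p \<le> Suc (expo S p)"
  shows "is_boolean_ext R S S'"
  unfolding is_boolean_ext_def
proof (intro conjI ballI)
  have sub: "interm R S S' \<subseteq> interm R k L" using interm_interval[OF S S'] by blast
  fix T U V assume "T \<in> interm R S S'" "U \<in> interm R S S'" "V \<in> interm R S S'"
  then show "T \<inter> compositum R U V = compositum R (T \<inter> U) (T \<inter> V)"
    using interm_distrib[of T U V] sub by blast
next
  fix V assume "V \<in> interm R S S'"
  then have V: "V \<in> interm R k L" and "S \<subseteq> V" "V \<subseteq> S'" using interm_interval[OF S S'] by auto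
  then have SV: "expo S \<le> expo V" and VS': "expo V \<le> expo S'"
    using subset_iff_expo_le S S' by auto
  define c where "c = (\<lambda>p. expo S p + expo S' p - expo V p)"
  have pointwise: "expo S p \<le> expo V p" "expo V p \<le> expo S' p" "expo S' p \<le> Suc (expo S p)" for p
    using le_funD[OF SV] le_funD[OF VS'] step by auto
  have dichotomy: "expo V p = expo S p \<or> expo V p = expo S' p" for p
    using pointwise[of p] by linarith
  have "expo S p \<le> c p" "c p \<le> expo S' p" for p using pointwise[of p] by (auto simp: c_def)
  then have S_c: "expo S \<le> c" and c_S': "c \<le> expo S'" by (auto simp: le_fun_def)
  have c_le: "c \<le> expo L" using c_S' expo_le_L[OF S'] by (rule order_trans)
  have "S \<subseteq> expo_field c" "expo_field c \<subseteq> S'"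
    using subset_iff_expo_le[OF S expo_field_interm] subset_iff_expo_le[OF expo_field_interm S']
      expo_expo_field[OF c_le] S_c c_S' by simp_all
  then have V'_interval: "expo_field c \<in> interm R S S'"
    using interm_interval[OF S S'] expo_field_interm by blast
  have "min (expo V p) (c p) = expo S p" "max (expo V p) (c p) = expo S' p" for p
    using dichotomy[of p] pointwise[of p] by (auto simp: c_def)
  then have "expo (V \<inter> expo_field c) = expo S" "expo (compositum R V (expo_field c)) = expo S'"
    using expo_inter[OF V expo_field_interm] expo_compositum[OF V expo_field_interm]
      expo_expo_field[OF c_le] by (simp_all add: fun_eq_iff inf_min sup_max)
  then have "V \<inter> expo_field c = S" "compositum R V (expo_field c) = S'"
    using expo_inj[OF interm_inter[OF V expo_field_interm] S]
      expo_inj[OF compositum_interm[OF V expo_field_interm] S'] by simp_all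
  then show "\<exists>V'\<in>interm R S S'. V \<inter> V' = S \<and> compositum R V V' = S'" using V'_interval by blast
qed

lemma loewy_step_boolean: "is_boolean_ext R (loewy R k L j) (loewy R k L (Suc j))"
  by (rule boolean_if_expo_step_le_one[OF loewy_interm loewy_interm]) (auto simp: expo_loewy le_fun_def)

lemma multiplicity_pos: "p \<in> P \<Longrightarrow> 1 \<le> multiplicity p r"
  using expo_L_pos expo_L by (simp add: Suc_le_eq)

lemma Max_multiplicity:
  assumes "k \<noteq> L"
  obtains p0 where "p0 \<in> P" "multiplicity p0 r = Max ((\<lambda>p. multiplicity p r) ` P)"
    "\<And>p. p \<in> P \<Longrightarrow> multiplicity p r \<le> Max ((\<lambda>p. multiplicity p r) ` P)"
proof -
  have "Max ((\<lambda>p. multiplicity p r) ` P) \<in> (\<lambda>p. multiplicity p r) ` P"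
    using P_nonempty[OF assms] by (intro Max_in) auto
  then obtain p0 where "p0 \<in> P" "multiplicity p0 r = Max ((\<lambda>p. multiplicity p r) ` P)" by auto
  then show thesis using that by simp
qed

lemma boolean_iff_Max_eq_1:
  assumes kL: "k \<noteq> L"
  shows "is_boolean_ext R k L \<longleftrightarrow> Max ((\<lambda>p. multiplicity p r) ` P) = 1"
proof -
  obtain p0 where p0: "p0 \<in> P" "multiplicity p0 r = Max ((\<lambda>p. multiplicity p r) ` P)"
    and le_Max: "\<And>p. p \<in> P \<Longrightarrow> multiplicity p r \<le> Max ((\<lambda>p. multiplicity p r) ` P)"
    using Max_multiplicity[OF kL] by blast
  show ?thesis
  proof
    assume boolean: "is_boolean_ext R k L"
    define A where "A = expo_field ((\<lambda>_. 0)(p0 := 1))"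
    have A: "A \<in> interm R k L" unfolding A_def by (rule expo_field_interm)
    have expo_A: "expo A = (\<lambda>_. 0)(p0 := 1)"
      unfolding A_def using expo_single[OF p0(1)] multiplicity_pos[OF p0(1)] expo_L[OF p0(1)] by simp
    have "\<exists>V'\<in>interm R k L. A \<inter> V' = k \<and> compositum R A V' = L"
      using conjunct2[OF boolean[unfolded is_boolean_ext_def]] A by (rule bspec)
    then obtain A' where A': "A' \<in> interm R k L" "A \<inter> A' = k" "compositum R A A' = L" by blast
    have "min 1 (expo A' p0) = 0"
      using fun_cong[OF expo_inter[OF A A'(1)], of p0] A'(2) expo_A expo_k by (simp add: inf_min)
    then have "max 1 (expo A' p0) = 1" by simp
    moreover have "max 1 (expo A' p0) = multiplicity p0 r"
      using fun_cong[OF expo_compositum[OF A A'(1)], of p0] A'(3) expo_A expo_L[OF p0(1)]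
      by (simp add: sup_max)
    ultimately show "Max ((\<lambda>p. multiplicity p r) ` P) = 1" using p0(2) by simp
  next
    assume Max1: "Max ((\<lambda>p. multiplicity p r) ` P) = 1"
    have "expo L p \<le> Suc (expo k p)" for p
    proof (cases "p \<in> P")
      case True
      then show ?thesis using le_Max[OF True] Max1 expo_L[OF True] expo_k by simp
    next
      case False
      then show ?thesis using expo_outside by simp
    qed
    then show "is_boolean_ext R k L"
      by (rule boolean_if_expo_step_le_one[OF k_interm L_interm expo_le_L[OF k_interm]])
  qed
qed

subsection \<open>\<open>\<Pi>\<close>-irreducible fields\<close>

lemma Pi_irreducible_iff:
  assumes T: "T \<in> interm R k L" and Tk: "T \<noteq> k"
  shows "Pi_irreducible R k L T \<longleftrightarrow> (\<exists>p\<in>P. \<exists>b\<in>{1..multiplicity p r}. dim k T = p ^ b)"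
proof
  assume "Pi_irreducible R k L T"
  then have irr: "T = T1 \<or> T = T2"
    if "T1 \<in> interm R k L" "T2 \<in> interm R k L" "T = compositum R T1 T2" for T1 T2
    using that unfolding Pi_irreducible_def by blast
  have T_le: "expo T \<le> expo L" by (rule expo_le_L[OF T])
  obtain p where p: "p \<in> P" "expo T p \<noteq> 0"
  proof (rule ccontr)
    assume "\<not> thesis"
    then have "expo T = expo k" using that expo_k expo_outside by (auto simp: fun_eq_iff)
    then show False using Tk expo_inj[OF T k_interm] by simp
  qed
  have single: "expo T q = 0" if q: "q \<in> P" "q \<noteq> p" for q
  proof (rule ccontr)
    assume nz: "expo T q \<noteq> 0"
    define T1 where "T1 = expo_field ((expo T)(q := 0))"
    define T2 where "T2 = expo_field ((expo T)(p := 0))"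
    have le: "(expo T)(q := 0) \<le> expo L" "(expo T)(p := 0) \<le> expo L"
      using T_le by (auto simp: le_fun_def)
    have T12: "T1 \<in> interm R k L" "T2 \<in> interm R k L" unfolding T1_def T2_def by (rule expo_field_interm)+
    have "expo (compositum R T1 T2) = sup ((expo T)(q := 0)) ((expo T)(p := 0))"
      using expo_compositum[OF T12] expo_expo_field[OF le(1)] expo_expo_field[OF le(2)]
      unfolding T1_def T2_def by simp
    also have "\<dots> = expo T" using q(2) by (auto simp: fun_eq_iff sup_max)
    finally have "T = compositum R T1 T2" using expo_inj[OF compositum_interm[OF T12] T] by simp
    then have "T = T1 \<or> T = T2" using irr T12 by blast
    moreover have "expo T1 q = 0" "expo T2 p = 0"
      unfolding T1_def T2_def expo_expo_field[OF le(1)] expo_expo_field[OF le(2)] by simp_all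
    ultimately show False using nz p(2) by auto
  qed
  have "expo T = (\<lambda>_. 0)(p := expo T p)"
    using single expo_outside by (auto simp: fun_eq_iff)
  then have "dim k T = p ^ expo T p" by (rule dim_eq_prime_power_iff[OF T p(1), THEN iffD2])
  moreover have "expo T p \<in> {1..multiplicity p r}" using p le_funD[OF T_le, of p] expo_L[OF p(1)] by auto
  ultimately show "\<exists>p\<in>P. \<exists>b\<in>{1..multiplicity p r}. dim k T = p ^ b" using p(1) by blast
next
  assume "\<exists>p\<in>P. \<exists>b\<in>{1..multiplicity p r}. dim k T = p ^ b"
  then obtain p b where p: "p \<in> P" and b: "1 \<le> b" and dim: "dim k T = p ^ b" by auto
  have expo_T: "expo T = (\<lambda>_. 0)(p := b)" by (rule dim_eq_prime_power_iff[OF T p, THEN iffD1, OF dim])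
  have "T = T1 \<or> T = T2"
    if T12: "T1 \<in> interm R k L" "T2 \<in> interm R k L" and eq: "T = compositum R T1 T2" for T1 T2
  proof -
    have sup: "max (expo T1 q) (expo T2 q) = ((\<lambda>_. 0)(p := b)) q" for q
      using fun_cong[OF expo_compositum[OF T12], of q] eq expo_T by (simp add: sup_max)
    have zero: "expo T1 q = 0 \<and> expo T2 q = 0" if "q \<noteq> p" for q
      using sup[of q] that by (simp add: max_def split: if_splits)
    have "expo T1 p = b \<or> expo T2 p = b" using sup[of p] by (auto simp: max_def split: if_splits)
    then show ?thesis
    proof
      assume "expo T1 p = b"
      then have "expo T1 = expo T" using zero expo_T by (auto simp: fun_eq_iff)
      then show ?thesis using expo_inj[OF T12(1) T] by simp
    next
      assume "expo T2 p = b"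
      then have "expo T2 = expo T" using zero expo_T by (auto simp: fun_eq_iff)
      then show ?thesis using expo_inj[OF T12(2) T] by simp
    qed
  qed
  then show "Pi_irreducible R k L T" using T unfolding Pi_irreducible_def by blast
qed

lemma Pi_irreducible_eq_image:
  "{T. Pi_irreducible R k L T \<and> T \<noteq> k} =
    (\<lambda>(p, b). expo_field ((\<lambda>_. 0)(p := b))) ` (SIGMA p:P. {1..multiplicity p r})"
proof (intro equalityI subsetI)
  fix T assume "T \<in> {T. Pi_irreducible R k L T \<and> T \<noteq> k}"
  then have irr: "Pi_irreducible R k L T" and Tk: "T \<noteq> k" by auto
  then have T: "T \<in> interm R k L" unfolding Pi_irreducible_def by blast
  obtain p b where p: "p \<in> P" "b \<in> {1..multiplicity p r}" "dim k T = p ^ b"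
    using Pi_irreducible_iff[OF T Tk] irr by blast
  have "expo T = (\<lambda>_. 0)(p := b)" by (rule dim_eq_prime_power_iff[OF T p(1), THEN iffD1, OF p(3)])
  moreover have "b \<le> expo L p" using p(2) expo_L[OF p(1)] by simp
  ultimately have "T = expo_field ((\<lambda>_. 0)(p := b))"
    using eq_expo_field_iff[OF T single_le_expo_L[OF p(1)]] by simp
  then show "T \<in> (\<lambda>(p, b). expo_field ((\<lambda>_. 0)(p := b))) ` (SIGMA p:P. {1..multiplicity p r})"
    using p by (intro image_eqI[where x = "(p, b)"]) simp_all
next
  fix T assume "T \<in> (\<lambda>(p, b). expo_field ((\<lambda>_. 0)(p := b))) ` (SIGMA p:P. {1..multiplicity p r})"
  then obtain p b where p: "p \<in> P" "1 \<le> b" "b \<le> multiplicity p r" and T_def: "T = expo_field ((\<lambda>_. 0)(p := b))"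
    by auto
  have T: "T \<in> interm R k L" unfolding T_def by (rule expo_field_interm)
  have b_le: "b \<le> expo L p" using p expo_L by simp
  have Tk: "T \<noteq> k"
  proof
    assume "T = k"
    then have "expo T p = 0" using expo_k by simp
    then show False using expo_single[OF p(1) b_le] p(2) unfolding T_def by simp
  qed
  moreover have "dim k T = p ^ b" unfolding T_def by (rule dim_single[OF p(1) b_le])
  moreover have "b \<in> {1..multiplicity p r}" using p by simp
  ultimately have "\<exists>p\<in>P. \<exists>b\<in>{1..multiplicity p r}. dim k T = p ^ b" using p(1) by blast
  then have "Pi_irreducible R k L T" by (rule Pi_irreducible_iff[OF T Tk, THEN iffD2])
  then show "T \<in> {T. Pi_irreducible R k L T \<and> T \<noteq> k}" using Tk by blast
qed

lemma card_Pi_irreducible: "card {T. Pi_irreducible R k L T \<and> T \<noteq> k} = (\<Sum>p\<in>P. multiplicity p r)"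
proof -
  have "inj_on (\<lambda>(p, b). expo_field ((\<lambda>_. 0)(p := b))) (SIGMA p:P. {1..multiplicity p r})"
  proof (rule inj_onI, clarify)
    fix p b q c assume p: "p \<in> P" "b \<in> {1..multiplicity p r}" and q: "q \<in> P" "c \<in> {1..multiplicity q r}"
      and eq: "expo_field ((\<lambda>_. 0)(p := b)) = expo_field ((\<lambda>_. 0)(q := c))"
    have bc: "b \<le> expo L p" "c \<le> expo L q" using p q expo_L by auto
    have "(\<lambda>_. 0)(p := b) = expo (expo_field ((\<lambda>_. 0)(p := b)))" using expo_single[OF p(1) bc(1)] by simp
    also have "\<dots> = expo (expo_field ((\<lambda>_. 0)(q := c)))" using eq by simp
    also have "\<dots> = (\<lambda>_. 0)(q := c)" using expo_single[OF q(1) bc(2)] .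
    finally have "(\<lambda>_. 0)(p := b) = (\<lambda>_. 0)(q := c)" .
    then have "((\<lambda>_. 0)(p := b)) p = ((\<lambda>_. 0)(q := c)) p" "((\<lambda>_. 0)(p := b)) q = ((\<lambda>_. 0)(q := c)) q"
      by simp_all
    then show "p = q \<and> b = c" using p(2) q(2) by (cases "p = q") auto
  qed
  then have "card {T. Pi_irreducible R k L T \<and> T \<noteq> k} = card (SIGMA p:P. {1..multiplicity p r})"
    unfolding Pi_irreducible_eq_image by (rule card_image)
  also have "\<dots> = (\<Sum>p\<in>P. multiplicity p r)" by (simp add: card_SigmaI)
  finally show ?thesis .
qed

subsection \<open>Counting and length\<close>

lemma finite_interm: "finite (interm R k L)"
  using bij_betw_finite[OF bij_betw_dim] r_pos by (simp add: finite_divisors_nat)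

lemma card_interm: "card (interm R k L) = card {d. d dvd r}"
  by (rule bij_betw_same_card[OF bij_betw_dim])

definition height :: "'a set \<Rightarrow> nat" where
  "height T = (\<Sum>p\<in>P. expo T p)"

lemma height_L: "height L = (\<Sum>p\<in>P. multiplicity p r)"
  unfolding height_def using expo_L by simp

lemma height_mono: "T \<in> interm R k L \<Longrightarrow> U \<in> interm R k L \<Longrightarrow> T \<subseteq> U \<Longrightarrow> height T \<le> height U"
  unfolding height_def using subset_iff_expo_le by (auto intro: sum_mono simp: le_fun_def)

lemma height_strict_mono:
  assumes T: "T \<in> interm R k L" and U: "U \<in> interm R k L" and TU: "T \<subset> U"
  shows "height T < height U"
proof -
  have le: "expo T \<le> expo U" using subset_iff_expo_le[OF T U] TU by blast
  have "expo T \<noteq> expo U" using expo_inj[OF T U] TU by blast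
  then obtain p where p: "expo T p \<noteq> expo U p" by (auto simp: fun_eq_iff)
  then have "p \<in> P" using expo_outside by (cases "p \<in> P") auto
  moreover have "expo T p < expo U p" using p le_funD[OF le, of p] by simp
  ultimately show ?thesis
    unfolding height_def using le by (intro sum_strict_mono_ex1) (auto simp: le_fun_def)
qed

lemma height_incr:
  assumes p: "p \<in> P"
  shows "(\<Sum>q\<in>P. ((expo T)(p := Suc (expo T p))) q) = Suc (height T)"
proof -
  have "(\<Sum>q\<in>P. ((expo T)(p := Suc (expo T p))) q) = (\<Sum>q\<in>P. expo T q + (if q = p then 1 else 0))"
    by (intro sum.cong) auto
  also have "\<dots> = Suc (height T)" using p by (simp add: sum.distrib height_def)
  finally show ?thesis .
qed

lemma chain_card_le:
  assumes C: "C \<subseteq> interm R k L" "finite C" and chain: "\<forall>A\<in>C. \<forall>B\<in>C. A \<subseteq> B \<or> B \<subseteq> A"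
  shows "card C \<le> Suc (\<Sum>p\<in>P. multiplicity p r)"
proof -
  have inj: "inj_on height C"
  proof (rule inj_onI)
    fix A B assume A: "A \<in> C" and B: "B \<in> C" and eq: "height A = height B"
    have AB: "A \<in> interm R k L" "B \<in> interm R k L" using A B C(1) by auto
    show "A = B"
    proof (rule ccontr)
      assume "A \<noteq> B"
      then have "A \<subset> B \<or> B \<subset> A" using chain A B by blast
      then have "height A < height B \<or> height B < height A"
        using height_strict_mono[OF AB] height_strict_mono[OF AB(2,1)] by blast
      then show False using eq by simp
    qed
  qed
  have sub: "height ` C \<subseteq> {..height L}"
  proof
    fix x assume "x \<in> height ` C"
    then obtain T where T: "T \<in> C" "x = height T" by blast
    then have "T \<in> interm R k L" using C(1) by blast
    then show "x \<in> {..height L}" using height_mono[OF _ L_interm] T(2) by (simp add: mem_interm)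
  qed
  have "card C = card (height ` C)" using card_image[OF inj] by simp
  also have "\<dots> \<le> card {..height L}" by (rule card_mono[OF finite_atMost sub])
  finally show ?thesis using height_L by simp
qed

text \<open>A maximal chain is built by repeatedly passing to an atom above the top element.\<close>

lemma chain_exists:
  assumes "n \<le> (\<Sum>p\<in>P. multiplicity p r)"
  shows "\<exists>C T. C \<subseteq> interm R k L \<and> finite C \<and> card C = Suc n \<and> (\<forall>A\<in>C. \<forall>B\<in>C. A \<subseteq> B \<or> B \<subseteq> A) \<and>
    T \<in> C \<and> (\<forall>A\<in>C. A \<subseteq> T) \<and> height T = n"
  using assms
proof (induction n)
  case 0
  have "height k = 0" by (simp add: height_def expo_k)
  then show ?case using k_interm by (intro exI[of _ "{k}"] exI[of _ k]) auto
next
  case (Suc n)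
  then obtain C T where C: "C \<subseteq> interm R k L" "finite C" "card C = Suc n"
    "\<forall>A\<in>C. \<forall>B\<in>C. A \<subseteq> B \<or> B \<subseteq> A" "T \<in> C" "\<forall>A\<in>C. A \<subseteq> T" "height T = n"
    by auto
  have T: "T \<in> interm R k L" using C by blast
  have "height T < height L" using C(7) Suc.prems height_L by simp
  have "\<exists>p\<in>P. expo T p < expo L p"
  proof (rule ccontr)
    assume "\<not> (\<exists>p\<in>P. expo T p < expo L p)"
    then have "expo L p \<le> expo T p" if "p \<in> P" for p using that by (simp add: not_less)
    then have "height L \<le> height T" unfolding height_def by (rule sum_mono)
    then show False using \<open>height T < height L\<close> by simp
  qed
  then obtain p where p: "p \<in> P" "expo T p < expo L p" by blast
  define T' where "T' = expo_field ((expo T)(p := Suc (expo T p)))"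
  have T': "T' \<in> interm R k L" unfolding T'_def by (rule expo_field_interm)
  have expo_T': "expo T' = (expo T)(p := Suc (expo T p))" unfolding T'_def by (rule expo_field_incr[OF T p(2)])
  have "expo T \<le> expo T'" using expo_T' by (simp add: le_fun_def)
  then have TT': "T \<subseteq> T'" using subset_iff_expo_le[OF T T'] by simp
  have height_T': "height T' = Suc n" using height_incr[OF p(1)] expo_T' C(7) by (simp add: height_def)
  have "T' \<notin> C"
  proof
    assume "T' \<in> C"
    then have "height T' \<le> height T" using height_mono[OF T' T] C(6) by blast
    then show False using height_T' C(7) by simp
  qed
  then have "card (insert T' C) = Suc (Suc n)" using C(2,3) by simp
  moreover have "\<forall>A\<in>insert T' C. \<forall>B\<in>insert T' C. A \<subseteq> B \<or> B \<subseteq> A"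
    using C(4,6) TT' by blast
  moreover have "\<forall>A\<in>insert T' C. A \<subseteq> T'" using C(6) TT' by blast
  ultimately show ?case using C(1,2) T' height_T' by (intro exI[of _ "insert T' C"] exI[of _ T']) auto
qed

lemma lattice_length_eq: "lattice_length R k L = (\<Sum>p\<in>P. multiplicity p r)"
proof -
  define N where "N = (\<Sum>p\<in>P. multiplicity p r)"
  define lengths where "lengths = {card C - 1 | C. C \<subseteq> interm R k L \<and> finite C \<and> C \<noteq> {} \<and>
    (\<forall>A\<in>C. \<forall>B\<in>C. A \<subseteq> B \<or> B \<subseteq> A)}"
  obtain C where C: "C \<subseteq> interm R k L" "finite C" "card C = Suc N"
      "\<forall>A\<in>C. \<forall>B\<in>C. A \<subseteq> B \<or> B \<subseteq> A"
    using chain_exists[of N] unfolding N_def by blast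
  then have "N = card C - 1 \<and> C \<subseteq> interm R k L \<and> finite C \<and> C \<noteq> {} \<and>
      (\<forall>A\<in>C. \<forall>B\<in>C. A \<subseteq> B \<or> B \<subseteq> A)" by auto
  then have "N \<in> lengths" unfolding lengths_def by blast
  moreover have "x \<le> N" if x: "x \<in> lengths" for x
  proof -
    obtain C where "x = card C - 1" "C \<subseteq> interm R k L" "finite C" "\<forall>A\<in>C. \<forall>B\<in>C. A \<subseteq> B \<or> B \<subseteq> A"
      using x unfolding lengths_def by blast
    then show ?thesis using chain_card_le[of C] unfolding N_def by simp
  qed
  ultimately have "Sup lengths = N" by (intro cSup_eq_maximum)
  then show ?thesis unfolding lattice_length_def lengths_def[symmetric] N_def .
qed

subsection \<open>Chains and \<open>\<P>\<close>-extensions\<close>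

lemma chain_iff_single_prime:
  assumes kL: "k \<noteq> L" shows "is_chain_ext R k L \<longleftrightarrow> card P = 1"
proof
  assume chain: "is_chain_ext R k L"
  show "card P = 1"
  proof (rule ccontr)
    assume "card P \<noteq> 1"
    obtain p where p: "p \<in> P" using P_nonempty[OF kL] by blast
    have "P \<noteq> {p}" using \<open>card P \<noteq> 1\<close> by auto
    then obtain q where q: "q \<in> P" "q \<noteq> p" using p by blast
    have one: "1 \<le> expo L p" "1 \<le> expo L q" using expo_L_pos p q(1) by (auto simp: Suc_le_eq)
    have "expo_field ((\<lambda>_. 0)(p := 1)) \<subseteq> expo_field ((\<lambda>_. 0)(q := 1)) \<or>
        expo_field ((\<lambda>_. 0)(q := 1)) \<subseteq> expo_field ((\<lambda>_. 0)(p := 1))"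
      using chain expo_field_interm unfolding is_chain_ext_def by blast
    then have "(\<lambda>_. (0::nat))(p := 1) \<le> (\<lambda>_. 0)(q := 1) \<or> (\<lambda>_. (0::nat))(q := 1) \<le> (\<lambda>_. 0)(p := 1)"
      by (simp only: expo_field_mono_iff[OF single_le_expo_L[OF p one(1)] single_le_expo_L[OF q(1) one(2)]]
        expo_field_mono_iff[OF single_le_expo_L[OF q(1) one(2)] single_le_expo_L[OF p one(1)]])
    then show False
    proof
      assume "(\<lambda>_. (0::nat))(p := 1) \<le> (\<lambda>_. 0)(q := 1)"
      then have "((\<lambda>_. 0)(p := 1)) p \<le> ((\<lambda>_. (0::nat))(q := 1)) p" by (rule le_funD)
      then show False using q(2) by simp
    next
      assume "(\<lambda>_. (0::nat))(q := 1) \<le> (\<lambda>_. 0)(p := 1)"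
      then have "((\<lambda>_. 0)(q := 1)) q \<le> ((\<lambda>_. (0::nat))(p := 1)) q" by (rule le_funD)
      then show False using q(2) by simp
    qed
  qed
next
  assume "card P = 1"
  then obtain p where P: "P = {p}" by (rule card_1_singletonE)
  show "is_chain_ext R k L" unfolding is_chain_ext_def
  proof (intro ballI)
    fix A B assume A: "A \<in> interm R k L" and B: "B \<in> interm R k L"
    have zero: "expo A q = 0 \<and> expo B q = 0" if "q \<noteq> p" for q using expo_outside P that by auto
    have "expo A \<le> expo B \<or> expo B \<le> expo A"
    proof (cases "expo A p \<le> expo B p")
      case True
      have "expo A x \<le> expo B x" for x using True zero[of x] by (cases "x = p") auto
      then have "expo A \<le> expo B" by (simp add: le_fun_def)
      then show ?thesis ..
    next
      case False
      have "expo B x \<le> expo A x" for x using False zero[of x] by (cases "x = p") auto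
      then have "expo B \<le> expo A" by (simp add: le_fun_def)
      then show ?thesis ..
    qed
    then show "A \<subseteq> B \<or> B \<subseteq> A" using subset_iff_expo_le[OF A B] subset_iff_expo_le[OF B A] by blast
  qed
qed

lemma mem_loewy_interval:
  "T \<in> interm R (loewy R k L j) (loewy R k L (Suc j)) \<longleftrightarrow>
    T \<in> interm R k L \<and> (\<lambda>p. min j (expo L p)) \<le> expo T \<and> expo T \<le> (\<lambda>p. min (Suc j) (expo L p))"
proof -
  have "T \<in> interm R (loewy R k L j) (loewy R k L (Suc j)) \<longleftrightarrow>
      T \<in> interm R k L \<and> loewy R k L j \<subseteq> T \<and> T \<subseteq> loewy R k L (Suc j)"
    using interm_interval[OF loewy_interm loewy_interm] by blast
  also have "\<dots> \<longleftrightarrow> T \<in> interm R k L \<and> (\<lambda>p. min j (expo L p)) \<le> expo T \<and> expo T \<le> (\<lambda>p. min (Suc j) (expo L p))"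
  proof (cases "T \<in> interm R k L")
    case True
    then show ?thesis
      using subset_iff_expo_le[OF loewy_interm True] subset_iff_expo_le[OF True loewy_interm] expo_loewy
      by simp
  qed simp
  finally show ?thesis .
qed

lemma P_ext_iff:
  assumes kL: "k \<noteq> L"
  shows "is_P_ext R k L \<longleftrightarrow> card P = 1 \<or> Max ((\<lambda>p. multiplicity p r) ` P) = 1"
proof -
  define M where "M = Max ((\<lambda>p. multiplicity p r) ` P)"
  obtain p0 where p0: "p0 \<in> P" "multiplicity p0 r = M" and le_M: "\<And>p. p \<in> P \<Longrightarrow> multiplicity p r \<le> M"
    using Max_multiplicity[OF kL] unfolding M_def by blast
  have M_pos: "1 \<le> M" using multiplicity_pos[OF p0(1)] p0(2) by simp
  let ?layer = "\<lambda>T j. (\<lambda>p. min j (expo L p)) \<le> expo T \<and> expo T \<le> (\<lambda>p. min (Suc j) (expo L p))"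
  have "is_P_ext R k L \<longleftrightarrow> interm R k L \<subseteq> (\<Union>j<M. interm R (loewy R k L j) (loewy R k L (Suc j)))"
    unfolding is_P_ext_def loewy_length_eq_Max[OF kL, folded M_def] using mem_loewy_interval by blast
  also have "\<dots> \<longleftrightarrow> (\<forall>T\<in>interm R k L. \<exists>j<M. ?layer T j)"
    using mem_loewy_interval by blast
  also have "\<dots> \<longleftrightarrow> card P = 1 \<or> M = 1"
  proof
    assume layers: "\<forall>T\<in>interm R k L. \<exists>j<M. ?layer T j"
    show "card P = 1 \<or> M = 1"
    proof (rule ccontr)
      assume "\<not> (card P = 1 \<or> M = 1)"
      then have two: "2 \<le> expo L p0" and "P \<noteq> {p0}" using M_pos p0 expo_L by auto
      then obtain q where q: "q \<in> P" "q \<noteq> p0" using p0(1) by blast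
      define T where "T = expo_field ((\<lambda>_. 0)(p0 := 2))"
      have expo_T: "expo T = (\<lambda>_. 0)(p0 := 2)" unfolding T_def by (rule expo_single[OF p0(1) two])
      obtain j where j: "?layer T j" using layers expo_field_interm unfolding T_def by blast
      have "min j (expo L q) \<le> 0" using le_funD[OF conjunct1[OF j], of q] expo_T q(2) by simp
      then have "j = 0" using expo_L_pos[OF q(1)] by simp
      then have "2 \<le> min 1 (expo L p0)" using le_funD[OF conjunct2[OF j], of p0] expo_T by simp
      then show False by simp
    qed
  next
    assume "card P = 1 \<or> M = 1"
    then show "\<forall>T\<in>interm R k L. \<exists>j<M. ?layer T j"
    proof
      assume "card P = 1"
      then obtain p where P: "P = {p}" by (rule card_1_singletonE)
      show ?thesis
      proof
        fix T assume T: "T \<in> interm R k L"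
        define j where "j = expo T p - 1"
        have le_L: "expo T p \<le> expo L p" using le_funD[OF expo_le_L[OF T]] .
        have "j < M" using le_L M_pos p0 P expo_L j_def by auto
        moreover have "min j (expo L x) \<le> expo T x \<and> expo T x \<le> min (Suc j) (expo L x)" for x
        proof (cases "x = p")
          case True
          then show ?thesis using le_L by (auto simp: j_def)
        next
          case False
          then show ?thesis using expo_outside P by simp
        qed
        then have "?layer T j" by (simp add: le_fun_def)
        ultimately show "\<exists>j<M. ?layer T j" by blast
      qed
    next
      assume M1: "M = 1"
      show ?thesis
      proof
        fix T assume T: "T \<in> interm R k L"
        have "expo L p \<le> 1" for p using le_M[of p] M1 expo_L[of p] expo_outside[of p L] by (cases "p \<in> P") auto
        then have "?layer T 0" using le_funD[OF expo_le_L[OF T]] by (auto simp: le_fun_def min_absorb2)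
        then show "\<exists>j<M. ?layer T j" using M1 by auto
      qed
    qed
  qed
  finally show ?thesis unfolding M_def .
qed

end

lemma (in field) field_endo_of_Gal: "g \<in> Gal R k L \<Longrightarrow> field_endo R L g"
  using ring_hom_memE[of g "R\<lparr>carrier := L\<rparr>" "R\<lparr>carrier := L\<rparr>"]
  unfolding Gal_def ring_iso_def field_endo_def by auto

lemma cyclic_galois_of_cyclic_ext:
  assumes F: "field R" and C: "cyclic_ext R k L"
  shows "\<exists>\<sigma>. cyclic_galois R k L \<sigma>"
proof -
  have k: "subfield k R" and L: "subfield L R" and kL: "k \<subseteq> L"
    and fd: "ring.finite_dimension R k L" and fixed: "{x\<in>L. \<forall>\<tau>\<in>Gal R k L. \<tau> x = x} = k"
    using C unfolding cyclic_ext_def galois_ext_def by auto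
  obtain \<sigma> where \<sigma>: "\<sigma> \<in> Gal R k L" and generates: "\<forall>\<tau>\<in>Gal R k L. \<exists>n. \<forall>x\<in>L. \<tau> x = (\<sigma> ^^ n) x"
    using C unfolding cyclic_ext_def by blast
  have "{x \<in> L. \<sigma> x = x} = k"
  proof
    show "k \<subseteq> {x \<in> L. \<sigma> x = x}" using kL \<sigma> unfolding Gal_def by auto
    have "\<tau> x = x" if x: "x \<in> L" "\<sigma> x = x" and \<tau>: "\<tau> \<in> Gal R k L" for x \<tau>
    proof -
      obtain n where "\<forall>y\<in>L. \<tau> y = (\<sigma> ^^ n) y" using generates \<tau> by blast
      moreover have "(\<sigma> ^^ n) x = x" for n using x(2) by (induct n) auto
      ultimately show ?thesis using x(1) by simp
    qed
    then show "{x \<in> L. \<sigma> x = x} \<subseteq> k" using fixed by blast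
  qed
  then have "cyclic_galois R k L \<sigma>"
    using F k L kL fd field.field_endo_of_Gal[OF F \<sigma>]
    unfolding cyclic_galois_def cyclic_galois_axioms_def by blast
  then show ?thesis by blast
qed

lemma if_less_eq_min: "(if a < j then a else j) = min j (a :: nat)"
  by simp

theorem theorem8p131:
  fixes R :: "('a, 'b) ring_scheme" and k L :: "'a set" and r n \<alpha> :: nat
    and P :: "nat set" and \<alpha>e :: "nat \<Rightarrow> nat" and A :: "nat \<Rightarrow> 'a set"
    and S :: "nat \<Rightarrow> 'a set" and \<beta> :: "nat \<Rightarrow> nat \<Rightarrow> nat"
  assumes "field R"
    and "cyclic_ext R k L"
    and "k \<subset> L"
    and "r = ring.dim R k L"
    and "P = prime_factors r"
    and "\<alpha>e = (\<lambda>p. multiplicity p r)"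
    and "A = (\<lambda>p. THE A. A \<in> atoms R k L \<and> ring.dim R k A = p)"
    and "\<alpha> = Max (\<alpha>e ` P)"
    and "S = loewy R k L"
    and "n = loewy_length R k L"
    and "\<beta> = (\<lambda>j p. if \<alpha>e p < j then \<alpha>e p else j)"
  shows
    \<comment> \<open>(1)\<close>
    "(\<forall>p\<in>P. \<exists>!A. A \<in> atoms R k L \<and> ring.dim R k A = p) \<and>
     (\<forall>T\<in>interm R k L. T \<in> atoms R k L \<longleftrightarrow> (\<exists>p\<in>P. ring.dim R k T = p))
    \<comment> \<open>(2)\<close>
   \<and> socle R k L = generate_field R (\<Union>p\<in>P. A p)
    \<comment> \<open>(3)\<close>
   \<and> (\<forall>j\<le>n. ring.dim R k (S j) = (\<Prod>p\<in>P. p ^ \<beta> j p))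
   \<and> (\<forall>j<n. \<forall>T\<in>interm R k L. T \<in> atoms R (S j) (S (Suc j)) \<longleftrightarrow>
        (\<exists>\<gamma>. ring.dim R k T = (\<Prod>p\<in>P. p ^ \<gamma> p) \<and>
           (\<exists>p0\<in>P. \<beta> j p0 < \<alpha>e p0 \<and> \<gamma> p0 = \<beta> j p0 + 1 \<and> (\<forall>p\<in>P - {p0}. \<gamma> p = \<beta> j p))))
   \<and> \<alpha> = n
    \<comment> \<open>(4)\<close>
   \<and> (\<forall>j<n. is_boolean_ext R (S j) (S (Suc j)))
    \<comment> \<open>(5)\<close>
   \<and> (\<forall>T\<in>interm R k L. T \<noteq> k \<longrightarrow>
        (Pi_irreducible R k L T \<longleftrightarrow> (\<exists>p\<in>P. \<exists>b\<in>{1..\<alpha>e p}. ring.dim R k T = p ^ b)))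
    \<comment> \<open>(6)\<close>
   \<and> finite (interm R k L)
   \<and> card (interm R k L) = card {d. d dvd r}
   \<and> card {d. d dvd r} = (\<Prod>p\<in>P. \<alpha>e p + 1)
   \<and> lattice_length R k L = (\<Sum>j<\<alpha>. card (atoms R (S j) (S (Suc j))))
   \<and> (\<Sum>j<\<alpha>. card (atoms R (S j) (S (Suc j)))) = (\<Sum>p\<in>P. \<alpha>e p)
   \<and> (\<Sum>p\<in>P. \<alpha>e p) = card {T. Pi_irreducible R k L T \<and> T \<noteq> k}
    \<comment> \<open>(7)\<close>
   \<and> (is_P_ext R k L \<longleftrightarrow> (is_boolean_ext R k L \<or> is_chain_ext R k L))
   \<and> ((is_boolean_ext R k L \<or> is_chain_ext R k L) \<longleftrightarrow> (card P = 1 \<or> \<alpha> = 1))"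
proof -
  obtain \<sigma> where "cyclic_galois R k L \<sigma>" using cyclic_galois_of_cyclic_ext[OF assms(1,2)] by blast
  then interpret cyclic_galois R k L \<sigma> .
  have kL: "k \<noteq> L" using assms(3) by blast
  show ?thesis
    unfolding assms(4-11) if_less_eq_min
    using atom_k_unique atom_k_iff socle_k[OF kL] dim_loewy atom_loewy_iff loewy_length_eq_Max[OF kL]
      loewy_step_boolean Pi_irreducible_iff finite_interm card_interm card_divisors[OF r_pos]
      lattice_length_eq sum_card_atoms_loewy card_Pi_irreducible P_ext_iff[OF kL]
      boolean_iff_Max_eq_1[OF kL] chain_iff_single_prime[OF kL]
    by auto
qed

end
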